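(* Let $n\ge1$, let $G=D_n$ be the dihedral group of order $2n$, and let $H\le G$ be any subgroup. If $H$ contains a Klein subgroup of $G$, then the restriction map $\operatorname{Res}:H^3(G,\mathbb{Z})\to H^3(H,\mathbb{Z})$ is injective (indeed an isomorphism, both groups being $\mathbb{Z}/2\mathbb{Z}$). If $H$ does not contain a Klein subgroup of $G$, then $\operatorname{Res}:H^3(G,\mathbb{Z})\to H^3(H,\mathbb{Z})$ is the zero map.
   Context: $D_n=\langle r,s\mid r^n=s^2=e,\ srs=r^{-1}\rangle$. A Klein subgroup of $G$ is a subgroup isomorphic to $\mathbb{Z}/2\mathbb{Z}\times\mathbb{Z}/2\mathbb{Z}$. $\mathbb{Z}$ is the trivial $G$-module. *)

theory Defs
  imports "HOL-Algebra.Algebra"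
begin

text \<open>Dihedral group D_n of order 2n: the pair (k,b) stands for r^k s^b (b = True meaning s^1),
  with 0 \<le> k < n.  Multiplication uses s r s = r^-1.\<close>
definition dihedral :: "nat \<Rightarrow> (int \<times> bool) monoid" where
  "dihedral n = \<lparr> carrier = {(k, b). 0 \<le> k \<and> k < int n},
     monoid.mult = (\<lambda>(k1, b1) (k2, b2). ((k1 + (if b1 then - k2 else k2)) mod int n, b1 \<noteq> b2)),
     one = (0, False) \<rparr>"

definition klein4 :: "(bool \<times> bool) monoid" where
  "klein4 = \<lparr> carrier = UNIV, monoid.mult = (\<lambda>(a, b) (c, d). (a \<noteq> c, b \<noteq> d)), one = (False, False) \<rparr>"

definition klein_subgroup :: "('a, 'b) monoid_scheme \<Rightarrow> 'a set \<Rightarrow> bool" where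
  "klein_subgroup G K \<longleftrightarrow> subgroup K G \<and> G\<lparr>carrier := K\<rparr> \<cong> klein4"

text \<open>Group cohomology with coefficients in the trivial module Z, via the standard
  inhomogeneous cochain complex: n-cochains are functions on n-tuples (lists of length n)
  of group elements with values in int.\<close>
definition tuples :: "('a, 'b) monoid_scheme \<Rightarrow> nat \<Rightarrow> 'a list set" where
  "tuples G n = {xs. length xs = n \<and> set xs \<subseteq> carrier G}"

definition cobound :: "('a, 'b) monoid_scheme \<Rightarrow> nat \<Rightarrow> ('a list \<Rightarrow> int) \<Rightarrow> 'a list \<Rightarrow> int" where
  "cobound G n f xs =
     f (tl xs)
     + (\<Sum>i\<in>{1..n}. (-1) ^ i * f (take (i - 1) xs @ [xs ! (i - 1) \<otimes>\<^bsub>G\<^esub> xs ! i] @ drop (i + 1) xs))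
     + (-1) ^ (n + 1) * f (butlast xs)"

definition cocycle :: "('a, 'b) monoid_scheme \<Rightarrow> nat \<Rightarrow> ('a list \<Rightarrow> int) \<Rightarrow> bool" where
  "cocycle G n f \<longleftrightarrow> (\<forall>xs \<in> tuples G (Suc n). cobound G n f xs = 0)"

definition coboundary :: "('a, 'b) monoid_scheme \<Rightarrow> nat \<Rightarrow> ('a list \<Rightarrow> int) \<Rightarrow> bool" where
  "coboundary G n f \<longleftrightarrow>
     (case n of 0 \<Rightarrow> (\<forall>xs \<in> tuples G 0. f xs = 0)
      | Suc m \<Rightarrow> (\<exists>h. \<forall>xs \<in> tuples G n. f xs = cobound G m h xs))"

text \<open>Since cochains are just functions, restriction is the identity on representatives,
  evaluated on the smaller tuple set of G(carrier := H).\<close>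
definition res_injective :: "('a, 'b) monoid_scheme \<Rightarrow> 'a set \<Rightarrow> nat \<Rightarrow> bool" where
  "res_injective G H n \<longleftrightarrow>
     (\<forall>f. cocycle G n f \<and> coboundary (G\<lparr>carrier := H\<rparr>) n f \<longrightarrow> coboundary G n f)"

definition res_surjective :: "('a, 'b) monoid_scheme \<Rightarrow> 'a set \<Rightarrow> nat \<Rightarrow> bool" where
  "res_surjective G H n \<longleftrightarrow>
     (\<forall>c. cocycle (G\<lparr>carrier := H\<rparr>) n c \<longrightarrow>
        (\<exists>f. cocycle G n f \<and> coboundary (G\<lparr>carrier := H\<rparr>) n (\<lambda>xs. c xs - f xs)))"

definition res_zero :: "('a, 'b) monoid_scheme \<Rightarrow> 'a set \<Rightarrow> nat \<Rightarrow> bool" where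
  "res_zero G H n \<longleftrightarrow> (\<forall>f. cocycle G n f \<longrightarrow> coboundary (G\<lparr>carrier := H\<rparr>) n f)"

end

theory Submission
  imports Defs
begin

text \<open>For a finite group \<open>S\<close>, averaging over the last variable writes every integral 3-cocycle
  \<open>f\<close> as \<open>\<delta>u\<close> for a real 2-cochain \<open>u\<close>; then \<open>u\<close> is a 2-cocycle mod \<open>\<int>\<close>, and \<open>f\<close> is a
  coboundary iff \<open>u\<close> is cohomologous to an integral cochain, i.e. iff the central extension
  \<open>\<real>/\<int> \<rightarrow> E \<rightarrow> S\<close> defined by \<open>u\<close> splits (\<open>H\<^sup>3(S, \<int>) \<cong> H\<^sup>2(S, \<real>/\<int>)\<close>).

  A subgroup \<open>H\<close> of \<open>D\<^sub>n\<close> is cyclic \<open>\<langle>\<rho>\<rangle>\<close> or dihedral \<open>\<langle>\<rho>, \<tau>\<rangle>\<close> with \<open>\<rho>\<close> a rotation of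
  order \<open>m\<close>. Since \<open>\<real>/\<int>\<close> is divisible, lifts of the generators can be corrected to satisfy the
  defining relations, except that for even \<open>m\<close> the half turn \<open>x = \<rho>\<^sup>m\<^sup>/\<^sup>2\<close> and \<open>\<tau>\<close> commute in \<open>H\<close> while
  their lifts commute only up to \<open>\<beta> = u x \<tau> - u \<tau> x\<close>, where \<open>2\<beta> \<in> \<int>\<close>. So the extension splits iff
  \<open>m\<close> is odd or \<open>\<beta> \<in> \<int>\<close>, and \<open>H\<close> contains a Klein subgroup exactly when it contains a reflection and
  \<open>m\<close> is even. In that case \<open>\<beta>\<close> is read off on \<open>H\<close> just as on \<open>D\<^sub>n\<close>, giving injectivity, and the
  explicit cocycle \<open>carry_cocycle\<close> attains \<open>\<beta> = 1/2\<close>, giving surjectivity; otherwise every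
  class dies on \<open>H\<close>.\<close>

section \<open>Integral 3-cocycles and real 2-cochains\<close>

lemma cobound_2_eq:
  "cobound G 2 h [a, b, c] = h [b, c] - h [a \<otimes>\<^bsub>G\<^esub> b, c] + h [a, b \<otimes>\<^bsub>G\<^esub> c] - h [a, b]"
  by (simp add: cobound_def numeral_2_eq_2)

lemma cobound_3_eq:
  "cobound G 3 f [a, b, c, e] =
     f [b, c, e] - f [a \<otimes>\<^bsub>G\<^esub> b, c, e] + f [a, b \<otimes>\<^bsub>G\<^esub> c, e] - f [a, b, c \<otimes>\<^bsub>G\<^esub> e] + f [a, b, c]"
  by (simp add: cobound_def numeral_3_eq_3)

lemma tuples_3_iff:
  "xs \<in> tuples G 3 \<longleftrightarrow> (\<exists>a b c. xs = [a, b, c] \<and> a \<in> carrier G \<and> b \<in> carrier G \<and> c \<in> carrier G)"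
  by (auto simp: tuples_def numeral_3_eq_3 length_Suc_conv)

lemma tuples_4_iff:
  "xs \<in> tuples G 4 \<longleftrightarrow>
     (\<exists>a b c e. xs = [a, b, c, e] \<and> a \<in> carrier G \<and> b \<in> carrier G \<and> c \<in> carrier G \<and> e \<in> carrier G)"
  by (auto simp: tuples_def numeral_eq_Suc length_Suc_conv)

lemma coboundary_3_iff: "coboundary S 3 f \<longleftrightarrow> (\<exists>h. \<forall>xs\<in>tuples S 3. f xs = cobound S 2 h xs)"
  by (simp add: coboundary_def eval_nat_numeral)

lemma cocycle_3_iff: "cocycle S 3 f \<longleftrightarrow> (\<forall>xs\<in>tuples S 4. cobound S 3 f xs = 0)"
  by (simp add: cocycle_def)

lemma cocycle_3_zero: "cocycle S 3 (\<lambda>xs. 0)"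
  by (simp add: cocycle_3_iff cobound_def)

definition rcobound2 :: "('a, 'b) monoid_scheme \<Rightarrow> ('a \<Rightarrow> 'a \<Rightarrow> real) \<Rightarrow> 'a \<Rightarrow> 'a \<Rightarrow> 'a \<Rightarrow> real" where
  "rcobound2 S u a b c = u b c - u (a \<otimes>\<^bsub>S\<^esub> b) c + u a (b \<otimes>\<^bsub>S\<^esub> c) - u a b"

definition real_primitive :: "('a, 'b) monoid_scheme \<Rightarrow> ('a \<Rightarrow> 'a \<Rightarrow> real) \<Rightarrow> ('a list \<Rightarrow> int) \<Rightarrow> bool" where
  "real_primitive S u f \<longleftrightarrow>
     (\<forall>a\<in>carrier S. \<forall>b\<in>carrier S. \<forall>c\<in>carrier S. rcobound2 S u a b c = f [a, b, c])"

text \<open>The class of \<open>u\<close> in \<open>H\<^sup>2(S, \<real>/\<int>)\<close> vanishes.\<close>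
definition cohomologous_to_int :: "('a, 'b) monoid_scheme \<Rightarrow> ('a \<Rightarrow> 'a \<Rightarrow> real) \<Rightarrow> bool" where
  "cohomologous_to_int S u \<longleftrightarrow>
     (\<exists>\<kappa>. \<forall>a\<in>carrier S. \<forall>b\<in>carrier S. u a b + \<kappa> a + \<kappa> b - \<kappa> (a \<otimes>\<^bsub>S\<^esub> b) \<in> \<int>)"

lemma rcobound2_restrict [simp]: "rcobound2 (G\<lparr>carrier := H\<rparr>) u a b c = rcobound2 G u a b c"
  by (simp add: rcobound2_def)

lemma real_primitive_restrict:
  "real_primitive G u f \<Longrightarrow> H \<subseteq> carrier G \<Longrightarrow> real_primitive (G\<lparr>carrier := H\<rparr>) u f"
  by (auto simp: real_primitive_def)

lemma real_primitive_Ints: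
  "real_primitive S u f \<Longrightarrow> a \<in> carrier S \<Longrightarrow> b \<in> carrier S \<Longrightarrow> c \<in> carrier S \<Longrightarrow> rcobound2 S u a b c \<in> \<int>"
  by (simp add: real_primitive_def)

lemma real_primitive_diff:
  assumes "real_primitive S u f" "real_primitive S v g"
  shows "real_primitive S (\<lambda>x y. u x y - v x y) (\<lambda>xs. f xs - g xs)"
  unfolding real_primitive_def
proof (intro ballI)
  fix a b c assume "a \<in> carrier S" "b \<in> carrier S" "c \<in> carrier S"
  with assms have "rcobound2 S u a b c = f [a, b, c]" "rcobound2 S v a b c = g [a, b, c]"
    by (simp_all add: real_primitive_def)
  thus "rcobound2 S (\<lambda>x y. u x y - v x y) a b c = real_of_int (f [a, b, c] - g [a, b, c])"
    by (simp add: rcobound2_def)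
qed

lemma rcobound2_cobound_zero:
  assumes "group S" "a \<in> carrier S" "b \<in> carrier S" "c \<in> carrier S" "e \<in> carrier S"
  shows "rcobound2 S v b c e - rcobound2 S v (a \<otimes>\<^bsub>S\<^esub> b) c e + rcobound2 S v a (b \<otimes>\<^bsub>S\<^esub> c) e
       - rcobound2 S v a b (c \<otimes>\<^bsub>S\<^esub> e) + rcobound2 S v a b c = 0"
  using assms by (simp add: rcobound2_def group.is_monoid monoid.m_assoc)

lemma (in group) sum_carrier_lmult:
  assumes "c \<in> carrier G"
  shows "(\<Sum>g\<in>carrier G. F (c \<otimes> g)) = (\<Sum>g\<in>carrier G. F g)"
  using sum.reindex[OF inj_on_cmult[OF assms], of F] surj_const_mult[OF assms] by (simp add: comp_def)

text \<open>Sum the cocycle identity for \<open>f [a, b, c, g]\<close> over \<open>g\<close>: the term \<open>f [a, b, c \<otimes> g]\<close>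
  sums to the same as \<open>f [a, b, g]\<close>, so \<open>u a b = -(\<Sum>g. f [a, b, g]) / |S|\<close> is a primitive.\<close>
lemma (in group) cocycle_3_real_primitive:
  assumes fin: "finite (carrier G)" and coc: "cocycle G 3 f"
  obtains u where "real_primitive G u f"
proof -
  define N where "N = real (card (carrier G))"
  have N: "N > 0" unfolding N_def using fin one_closed card_gt_0_iff by fastforce
  define h where "h a b = (\<Sum>g\<in>carrier G. real_of_int (f [a, b, g]))" for a b
  have key: "h b c - h (a \<otimes> b) c + h a (b \<otimes> c) - h a b + N * f [a, b, c] = 0"
    if abc: "a \<in> carrier G" "b \<in> carrier G" "c \<in> carrier G" for a b c
  proof -
    have z: "real_of_int (f [b, c, g]) - f [a \<otimes> b, c, g] + f [a, b \<otimes> c, g] - f [a, b, c \<otimes> g]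
        + f [a, b, c] = 0" if "g \<in> carrier G" for g
    proof -
      have "cobound G 3 f [a, b, c, g] = 0" using coc abc that by (auto simp: cocycle_3_iff tuples_4_iff)
      thus ?thesis by (simp add: cobound_3_eq)
    qed
    have "(\<Sum>g\<in>carrier G. real_of_int (f [b, c, g]) - f [a \<otimes> b, c, g] + f [a, b \<otimes> c, g]
        - f [a, b, c \<otimes> g] + f [a, b, c]) = 0"
      using z by simp
    hence "(\<Sum>g\<in>carrier G. real_of_int (f [b, c, g])) - (\<Sum>g\<in>carrier G. real_of_int (f [a \<otimes> b, c, g]))
       + (\<Sum>g\<in>carrier G. real_of_int (f [a, b \<otimes> c, g])) - (\<Sum>g\<in>carrier G. real_of_int (f [a, b, c \<otimes> g]))
       + (\<Sum>g\<in>carrier G. real_of_int (f [a, b, c])) = 0"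
      by (simp only: sum.distrib sum_subtractf)
    moreover have "(\<Sum>g\<in>carrier G. real_of_int (f [a, b, c \<otimes> g])) = h a b"
      unfolding h_def by (rule sum_carrier_lmult[OF abc(3)])
    ultimately show ?thesis unfolding h_def N_def by simp
  qed
  show ?thesis
  proof (rule that[of "\<lambda>a b. - h a b / N"], unfold real_primitive_def, intro ballI)
    fix a b c assume abc: "a \<in> carrier G" "b \<in> carrier G" "c \<in> carrier G"
    from N have "rcobound2 G (\<lambda>a b. - h a b / N) a b c = - (h b c - h (a \<otimes> b) c + h a (b \<otimes> c) - h a b) / N"
      by (simp add: rcobound2_def field_simps)
    also have "\<dots> = f [a, b, c]" using key[OF abc] N by (simp add: field_simps)
    finally show "rcobound2 G (\<lambda>a b. - h a b / N) a b c = f [a, b, c]" .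
  qed
qed

lemma (in group) coboundary_3_if_cohomologous_to_int:
  assumes prim: "real_primitive G u f" and coh: "cohomologous_to_int G u"
  shows "coboundary G 3 f"
proof -
  obtain \<kappa> where \<kappa>: "\<And>a b. a \<in> carrier G \<Longrightarrow> b \<in> carrier G \<Longrightarrow> u a b + \<kappa> a + \<kappa> b - \<kappa> (a \<otimes> b) \<in> \<int>"
    using coh unfolding cohomologous_to_int_def by blast
  define w where "w xs = \<lfloor>u (xs!0) (xs!1) + \<kappa> (xs!0) + \<kappa> (xs!1) - \<kappa> (xs!0 \<otimes> xs!1)\<rfloor>" for xs
  have w: "real_of_int (w [a, b]) = u a b + \<kappa> a + \<kappa> b - \<kappa> (a \<otimes> b)"
    if "a \<in> carrier G" "b \<in> carrier G" for a b
    using \<kappa>[OF that] by (auto simp: w_def elim: Ints_cases)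
  show ?thesis unfolding coboundary_3_iff
  proof (intro exI ballI)
    fix xs assume "xs \<in> tuples G 3"
    then obtain a b c where xs: "xs = [a, b, c]" and abc: "a \<in> carrier G" "b \<in> carrier G" "c \<in> carrier G"
      unfolding tuples_3_iff by blast
    have "real_of_int (cobound G 2 w [a, b, c]) = rcobound2 G u a b c"
      unfolding cobound_2_eq rcobound2_def using abc by (simp add: w m_assoc)
    also have "\<dots> = f [a, b, c]" using prim abc by (simp add: real_primitive_def)
    finally show "f xs = cobound G 2 w xs" using xs by simp
  qed
qed

text \<open>If \<open>f = \<delta>k\<close> then \<open>z = u - k\<close> is a real 2-cocycle, and averaging \<open>z\<close> over its second
  argument exhibits it as a real coboundary.\<close>
lemma (in group) cohomologous_to_int_if_coboundary_3:
  assumes fin: "finite (carrier G)" and prim: "real_primitive G u f" and cob: "coboundary G 3 f"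
  shows "cohomologous_to_int G u"
proof -
  obtain k where k: "\<forall>xs\<in>tuples G 3. f xs = cobound G 2 k xs" using cob unfolding coboundary_3_iff by blast
  define N where "N = real (card (carrier G))"
  have N: "N > 0" unfolding N_def using fin one_closed card_gt_0_iff by fastforce
  define z where "z a b = u a b - real_of_int (k [a, b])" for a b
  have dz: "z b c - z (a \<otimes> b) c + z a (b \<otimes> c) - z a b = 0"
    if abc: "a \<in> carrier G" "b \<in> carrier G" "c \<in> carrier G" for a b c
  proof -
    have "rcobound2 G u a b c = k [b, c] - k [a \<otimes> b, c] + k [a, b \<otimes> c] - k [a, b]"
      using prim k abc by (auto simp: real_primitive_def tuples_3_iff cobound_2_eq)
    thus ?thesis unfolding z_def rcobound2_def by simp
  qed
  define Z where "Z a = (\<Sum>g\<in>carrier G. z a g)" for a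
  have key: "Z b - Z (a \<otimes> b) + Z a - N * z a b = 0" if ab: "a \<in> carrier G" "b \<in> carrier G" for a b
  proof -
    have "(\<Sum>g\<in>carrier G. z b g - z (a \<otimes> b) g + z a (b \<otimes> g) - z a b) = 0"
      using dz ab by simp
    hence "(\<Sum>g\<in>carrier G. z b g) - (\<Sum>g\<in>carrier G. z (a \<otimes> b) g) + (\<Sum>g\<in>carrier G. z a (b \<otimes> g))
        - (\<Sum>g\<in>carrier G. z a b) = 0"
      by (simp only: sum.distrib sum_subtractf)
    moreover have "(\<Sum>g\<in>carrier G. z a (b \<otimes> g)) = Z a" unfolding Z_def by (rule sum_carrier_lmult[OF ab(2)])
    ultimately show ?thesis unfolding Z_def N_def by simp
  qed
  show ?thesis unfolding cohomologous_to_int_def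
  proof (intro exI ballI)
    fix a b assume ab: "a \<in> carrier G" "b \<in> carrier G"
    have "u a b + - Z a / N + - Z b / N - - Z (a \<otimes> b) / N = u a b - (Z b - Z (a \<otimes> b) + Z a) / N"
      using N by (simp add: field_simps)
    also have "\<dots> = real_of_int (k [a, b])" using key[OF ab] N by (simp add: z_def field_simps)
    finally show "u a b + - Z a / N + - Z b / N - - Z (a \<otimes> b) / N \<in> \<int>" by simp
  qed
qed

lemma cohomologous_to_int_commute:
  assumes "cohomologous_to_int S u" "a \<in> carrier S" "b \<in> carrier S" "a \<otimes>\<^bsub>S\<^esub> b = b \<otimes>\<^bsub>S\<^esub> a"
  shows "u a b - u b a \<in> \<int>"
proof -
  obtain \<kappa> where \<kappa>: "\<forall>a\<in>carrier S. \<forall>b\<in>carrier S. u a b + \<kappa> a + \<kappa> b - \<kappa> (a \<otimes>\<^bsub>S\<^esub> b) \<in> \<int>"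
    using assms(1) unfolding cohomologous_to_int_def by blast
  have "u a b + \<kappa> a + \<kappa> b - \<kappa> (a \<otimes>\<^bsub>S\<^esub> b) \<in> \<int>" "u b a + \<kappa> b + \<kappa> a - \<kappa> (b \<otimes>\<^bsub>S\<^esub> a) \<in> \<int>"
    using \<kappa> assms(2,3) by auto
  hence "(u a b + \<kappa> a + \<kappa> b - \<kappa> (a \<otimes>\<^bsub>S\<^esub> b)) - (u b a + \<kappa> b + \<kappa> a - \<kappa> (b \<otimes>\<^bsub>S\<^esub> a)) \<in> \<int>"
    by (rule Ints_diff)
  thus ?thesis using assms(4) by (simp add: algebra_simps)
qed

section \<open>Dihedral relations in an abstract group\<close>

definition dihedral_relations :: "('a, 'b) monoid_scheme \<Rightarrow> 'a \<Rightarrow> 'a \<Rightarrow> nat \<Rightarrow> bool" where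
  "dihedral_relations S \<rho> \<tau> m \<longleftrightarrow> \<rho> \<in> carrier S \<and> \<tau> \<in> carrier S \<and> \<rho> [^]\<^bsub>S\<^esub> m = \<one>\<^bsub>S\<^esub>
     \<and> \<tau> \<otimes>\<^bsub>S\<^esub> \<tau> = \<one>\<^bsub>S\<^esub> \<and> \<tau> \<otimes>\<^bsub>S\<^esub> \<rho> \<otimes>\<^bsub>S\<^esub> \<tau> \<otimes>\<^bsub>S\<^esub> \<rho> = \<one>\<^bsub>S\<^esub>"

definition dihedral_word :: "('a, 'b) monoid_scheme \<Rightarrow> 'a \<Rightarrow> 'a \<Rightarrow> nat \<times> bool \<Rightarrow> 'a" where
  "dihedral_word S \<rho> \<tau> = (\<lambda>(i, e). \<rho> [^]\<^bsub>S\<^esub> i \<otimes>\<^bsub>S\<^esub> (if e then \<tau> else \<one>\<^bsub>S\<^esub>))"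

definition dihedral_index :: "nat \<Rightarrow> nat \<times> bool \<Rightarrow> nat \<times> bool \<Rightarrow> nat \<times> bool" where
  "dihedral_index m = (\<lambda>(i, e) (j, f). (nat ((int i + (if e then - int j else int j)) mod int m), e \<noteq> f))"

lemma dihedral_index_lessThan: "0 < m \<Longrightarrow> dihedral_index m p q \<in> {..<m} \<times> UNIV"
  by (cases p, cases q) (simp add: dihedral_index_def nat_less_iff)

lemma (in group) involution_conj_int_pow:
  assumes T: "T \<in> carrier G" "T \<otimes> T = \<one>" and x: "x \<in> carrier G"
  shows "T \<otimes> x [^] (k::int) \<otimes> T = (T \<otimes> x \<otimes> T) [^] k"
proof -
  have h: "(\<lambda>y. T \<otimes> y \<otimes> T) \<in> hom G G"
  proof (rule homI)
    fix a b assume ab: "a \<in> carrier G" "b \<in> carrier G"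
    have "T \<otimes> (T \<otimes> z) = z" if "z \<in> carrier G" for z
      using T that by (simp add: m_assoc[symmetric])
    thus "T \<otimes> (a \<otimes> b) \<otimes> T = (T \<otimes> a \<otimes> T) \<otimes> (T \<otimes> b \<otimes> T)"
      using T ab by (simp add: m_assoc)
  qed (use T in auto)
  show ?thesis using hom_int_pow[OF h x is_group is_group] by simp
qed

lemma (in group) int_pow_mod_order:
  assumes x: "x \<in> carrier G" and xm: "x [^] (m::nat) = \<one>"
  shows "x [^] (a::int) = x [^] (a mod int m)"
proof -
  have "x [^] a = x [^] (int m * (a div int m)) \<otimes> x [^] (a mod int m)"
    by (metis x int_pow_mult div_mult_mod_eq mult.commute)
  also have "x [^] (int m * (a div int m)) = \<one>"
    using x xm by (simp add: int_pow_pow[symmetric] int_pow_int)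
  finally show ?thesis using x by simp
qed

lemma (in group) nat_pow_mod_order:
  assumes x: "x \<in> carrier G" and xm: "x [^] (m::nat) = \<one>"
  shows "x [^] (a::nat) = x [^] (a mod m)"
proof -
  have "x [^] a = x [^] (m * (a div m)) \<otimes> x [^] (a mod m)"
    by (metis x nat_pow_mult div_mult_mod_eq mult.commute)
  also have "x [^] (m * (a div m)) = \<one>"
    using x xm by (simp add: nat_pow_pow[symmetric])
  finally show ?thesis using x by simp
qed

lemma (in group) dihedral_relations_int_pow_mult:
  assumes "dihedral_relations G Y T m"
  shows "(Y [^] (i::int) \<otimes> (if e then T else \<one>)) \<otimes> (Y [^] (j::int) \<otimes> (if f then T else \<one>))
       = Y [^] ((i + (if e then -j else j)) mod int m) \<otimes> (if e \<noteq> f then T else \<one>)"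
proof -
  have Y: "Y \<in> carrier G" and T: "T \<in> carrier G" and Ym: "Y [^] m = \<one>" and TT: "T \<otimes> T = \<one>"
    and TY: "T \<otimes> Y \<otimes> T \<otimes> Y = \<one>"
    using assms by (auto simp: dihedral_relations_def)
  have "inv Y = T \<otimes> Y \<otimes> T" using TY Y T by (intro inv_equality) auto
  hence "T \<otimes> Y [^] j \<otimes> T = (inv Y) [^] j" using involution_conj_int_pow[OF T TT Y, of j] by simp
  hence "T \<otimes> Y [^] j \<otimes> T = Y [^] (-j)" using Y by (simp add: int_pow_inv int_pow_neg)
  hence swap: "T \<otimes> Y [^] j = Y [^] (-j) \<otimes> T"
    using T Y TT by (metis int_pow_closed m_assoc m_closed r_one)
  show ?thesis
  proof (cases e)
    case True
    have "(Y [^] i \<otimes> T) \<otimes> (Y [^] j \<otimes> (if f then T else \<one>)) = Y [^] i \<otimes> (T \<otimes> Y [^] j) \<otimes> (if f then T else \<one>)"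
      using Y T by (simp add: m_assoc)
    also have "\<dots> = Y [^] i \<otimes> Y [^] (-j) \<otimes> (T \<otimes> (if f then T else \<one>))"
      using Y T by (simp add: swap m_assoc)
    also have "\<dots> = Y [^] (i + - j) \<otimes> (if f then \<one> else T)"
      using Y T TT int_pow_mult[OF Y, of i "-j"] by simp
    finally show ?thesis using True int_pow_mod_order[OF Y Ym, of "i - j"] by simp
  next
    case False
    have "(Y [^] i \<otimes> \<one>) \<otimes> (Y [^] j \<otimes> (if f then T else \<one>)) = Y [^] (i + j) \<otimes> (if f then T else \<one>)"
      using Y T by (simp add: m_assoc int_pow_mult)
    thus ?thesis using False int_pow_mod_order[OF Y Ym, of "i + j"] by simp
  qed
qed

lemma (in group) dihedral_word_mult:
  assumes "dihedral_relations G Y T m" "0 < m"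
  shows "dihedral_word G Y T p \<otimes> dihedral_word G Y T q = dihedral_word G Y T (dihedral_index m p q)"
proof -
  obtain i e j f where pq: "p = (i, e)" "q = (j, f)" by (cases p, cases q)
  have "0 \<le> (int i + (if e then - int j else int j)) mod int m" using assms(2) by simp
  thus ?thesis
    using dihedral_relations_int_pow_mult[OF assms(1), of "int i" e "int j" f]
    by (simp add: pq dihedral_word_def dihedral_index_def int_pow_int[symmetric] del: int_pow_int)
qed

lemma (in group) dihedral_half_turn_commute:
  assumes "dihedral_relations G \<rho> \<tau> (2 * k)"
  shows "\<rho> [^] k \<otimes> \<tau> = \<tau> \<otimes> \<rho> [^] k"
proof -
  have \<rho>: "\<rho> \<in> carrier G" and \<tau>: "\<tau> \<in> carrier G" and tt: "\<tau> \<otimes> \<tau> = \<one>"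
    and tr: "\<tau> \<otimes> \<rho> \<otimes> \<tau> \<otimes> \<rho> = \<one>"
    using assms by (auto simp: dihedral_relations_def)
  define x where "x = \<rho> [^] k"
  have x: "x \<in> carrier G" using \<rho> by (simp add: x_def)
  have "x \<otimes> x = \<one>" using assms \<rho> by (simp add: x_def nat_pow_mult dihedral_relations_def mult_2)
  hence invx: "inv x = x" using x by (intro inv_equality) auto
  have "inv \<rho> = \<tau> \<otimes> \<rho> \<otimes> \<tau>" using tr \<rho> \<tau> by (intro inv_equality) auto
  hence "\<tau> \<otimes> \<rho> [^] (int k) \<otimes> \<tau> = (inv \<rho>) [^] (int k)" using involution_conj_int_pow[OF \<tau> tt \<rho>] by simp
  hence conj_x: "\<tau> \<otimes> x \<otimes> \<tau> = x" using \<rho> invx by (simp add: int_pow_int x_def nat_pow_inv)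
  have "\<tau> \<otimes> x = (\<tau> \<otimes> x \<otimes> \<tau>) \<otimes> \<tau>" using x \<tau> tt by (simp add: m_assoc)
  thus ?thesis using conj_x by (simp add: x_def)
qed

section \<open>Central extensions by \<open>\<real>/\<int>\<close>\<close>

lemma frac_eq_iff_diff_Ints: "frac x = frac y \<longleftrightarrow> x - y \<in> \<int>"
proof
  assume "frac x = frac y"
  then obtain k where "x = y + of_int k" by (rule frac_eqE)
  thus "x - y \<in> \<int>" by simp
qed (metis diff_add_cancel frac_add_int_left)

text \<open>The extension of \<open>S\<close> by \<open>\<real>/\<int>\<close> with cocycle \<open>u\<close>; \<open>\<real>/\<int>\<close> is represented by \<open>[0, 1)\<close>.\<close>
definition circle_ext :: "('a, 'b) monoid_scheme \<Rightarrow> ('a \<Rightarrow> 'a \<Rightarrow> real) \<Rightarrow> (real \<times> 'a) monoid" where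
  "circle_ext S u = \<lparr>carrier = {(q, g). 0 \<le> q \<and> q < 1 \<and> g \<in> carrier S},
     monoid.mult = (\<lambda>(q, g) (q', g'). (frac (q + q' + u g g'), g \<otimes>\<^bsub>S\<^esub> g')),
     one = (frac (- u \<one>\<^bsub>S\<^esub> \<one>\<^bsub>S\<^esub>), \<one>\<^bsub>S\<^esub>)\<rparr>"

locale circle_extension = group S for S (structure) +
  fixes u :: "'a \<Rightarrow> 'a \<Rightarrow> real"
  assumes rcobound2_Ints: "\<lbrakk>a \<in> carrier S; b \<in> carrier S; c \<in> carrier S\<rbrakk> \<Longrightarrow> rcobound2 S u a b c \<in> \<int>"
begin

abbreviation E where "E \<equiv> circle_ext S u"

abbreviation ext_mult (infixl "**" 70) where "x ** y \<equiv> x \<otimes>\<^bsub>E\<^esub> y"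

lemma ext_carrier_iff: "x \<in> carrier E \<longleftrightarrow> 0 \<le> fst x \<and> fst x < 1 \<and> snd x \<in> carrier S"
  by (cases x) (simp add: circle_ext_def)

lemma ext_mult: "(q, g) ** (q', g') = (frac (q + q' + u g g'), g \<otimes> g')"
  by (simp add: circle_ext_def)

lemma ext_one: "\<one>\<^bsub>E\<^esub> = (frac (- u \<one> \<one>), \<one>)"
  by (simp add: circle_ext_def)

lemma u_one_left: "g \<in> carrier S \<Longrightarrow> u \<one> g - u \<one> \<one> \<in> \<int>"
  using rcobound2_Ints[of \<one> \<one> g] by (simp add: rcobound2_def)

lemma u_one_right: "g \<in> carrier S \<Longrightarrow> u g \<one> - u \<one> \<one> \<in> \<int>"
  using Ints_minus[OF rcobound2_Ints[of g \<one> \<one>]] by (simp add: rcobound2_def)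

text \<open>Associativity of \<open>E\<close> is the condition \<open>\<delta>u \<in> \<int>\<close>.\<close>
lemma ext_mult_assoc:
  assumes g: "g \<in> carrier S" "g' \<in> carrier S" "g'' \<in> carrier S"
  shows "(q, g) ** (q', g') ** (q'', g'') = (q, g) ** ((q', g') ** (q'', g''))"
proof -
  have "frac (frac (q + q' + u g g') + q'' + u (g \<otimes> g') g'')
      = frac ((q + q' + u g g') + (q'' + u (g \<otimes> g') g''))"
    using frac_add_simps(1)[of "q + q' + u g g'" "q'' + u (g \<otimes> g') g''"] by (simp add: add.assoc)
  also have "\<dots> = frac ((q + u g (g' \<otimes> g'')) + (q' + q'' + u g' g''))"
  proof -
    have "(q + q' + u g g') + (q'' + u (g \<otimes> g') g'') - ((q + u g (g' \<otimes> g'')) + (q' + q'' + u g' g''))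
        = - rcobound2 S u g g' g''"
      by (simp add: rcobound2_def)
    thus ?thesis using Ints_minus[OF rcobound2_Ints[OF g]] by (simp add: frac_eq_iff_diff_Ints)
  qed
  also have "\<dots> = frac ((q + u g (g' \<otimes> g'')) + frac (q' + q'' + u g' g''))"
    by (rule frac_add_simps(2)[symmetric])
  finally have "frac (frac (q + q' + u g g') + q'' + u (g \<otimes> g') g'')
      = frac (q + frac (q' + q'' + u g' g'') + u g (g' \<otimes> g''))"
    by (simp add: algebra_simps)
  thus ?thesis using g by (simp add: ext_mult m_assoc)
qed

lemma group_ext: "group E"
proof (rule groupI)
  fix x y assume "x \<in> carrier E" "y \<in> carrier E"
  thus "x ** y \<in> carrier E" by (cases x, cases y) (simp add: ext_mult ext_carrier_iff frac_lt_1)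
next
  show "\<one>\<^bsub>E\<^esub> \<in> carrier E" by (simp add: ext_one ext_carrier_iff frac_lt_1)
next
  fix x y z assume "x \<in> carrier E" "y \<in> carrier E" "z \<in> carrier E"
  thus "x ** y ** z = x ** (y ** z)"
    by (cases x, cases y, cases z) (simp add: ext_carrier_iff ext_mult_assoc)
next
  fix x assume x: "x \<in> carrier E"
  obtain q g where xq: "x = (q, g)" by (cases x)
  have g: "g \<in> carrier S" and q: "0 \<le> q" "q < 1" using x xq by (auto simp: ext_carrier_iff)
  have "frac (- u \<one> \<one> + (q + u \<one> g)) = frac q"
    using u_one_left[OF g] by (simp add: frac_eq_iff_diff_Ints algebra_simps)
  hence "frac (frac (- u \<one> \<one>) + q + u \<one> g) = frac q" by (simp add: add.assoc)
  thus "\<one>\<^bsub>E\<^esub> ** x = x" using g q by (simp add: xq ext_one ext_mult)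
next
  fix x assume x: "x \<in> carrier E"
  obtain q g where xq: "x = (q, g)" by (cases x)
  have g: "g \<in> carrier S" using x xq by (auto simp: ext_carrier_iff)
  define y where "y = (frac (- u \<one> \<one> - q - u (inv g) g), inv g)"
  have "y \<in> carrier E" using g by (simp add: y_def ext_carrier_iff frac_lt_1)
  moreover have "y ** x = \<one>\<^bsub>E\<^esub>"
    using g frac_add_simps(1)[of "- u \<one> \<one> - q - u (inv g) g" "q + u (inv g) g"]
    by (simp add: y_def xq ext_mult ext_one add.assoc)
  ultimately show "\<exists>y\<in>carrier E. y ** x = \<one>\<^bsub>E\<^esub>" by blast
qed

definition iota :: "real \<Rightarrow> real \<times> 'a" where "iota \<alpha> = (frac (\<alpha> - u \<one> \<one>), \<one>)"

lemma iota_carrier [simp]: "iota \<alpha> \<in> carrier E"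
  by (simp add: iota_def ext_carrier_iff frac_lt_1)

lemma iota_mult_left:
  assumes "g \<in> carrier S" shows "iota \<alpha> ** (q, g) = (frac (\<alpha> + q), g)"
proof -
  have "frac ((\<alpha> - u \<one> \<one>) + (q + u \<one> g)) = frac (\<alpha> + q)"
    using u_one_left[OF assms] by (simp add: frac_eq_iff_diff_Ints algebra_simps)
  hence "frac (frac (\<alpha> - u \<one> \<one>) + q + u \<one> g) = frac (\<alpha> + q)"
    using frac_add_simps(1)[of "\<alpha> - u \<one> \<one>" "q + u \<one> g"] by (simp add: add.assoc)
  thus ?thesis using assms by (simp add: iota_def ext_mult)
qed

lemma iota_mult_right:
  assumes "g \<in> carrier S" shows "(q, g) ** iota \<alpha> = (frac (\<alpha> + q), g)"
proof -
  have "frac ((\<alpha> - u \<one> \<one>) + (q + u g \<one>)) = frac (\<alpha> + q)"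
    using u_one_right[OF assms] by (simp add: frac_eq_iff_diff_Ints algebra_simps)
  hence "frac (q + frac (\<alpha> - u \<one> \<one>) + u g \<one>) = frac (\<alpha> + q)"
    using frac_add_simps(1)[of "\<alpha> - u \<one> \<one>" "q + u g \<one>"] by (simp add: algebra_simps)
  thus ?thesis using assms by (simp add: iota_def ext_mult)
qed

lemma iota_central: "x \<in> carrier E \<Longrightarrow> iota \<alpha> ** x = x ** iota \<alpha>"
  by (cases x) (simp add: ext_carrier_iff iota_mult_left iota_mult_right)

lemma iota_mult: "iota \<alpha> ** iota \<beta> = iota (\<alpha> + \<beta>)"
  by (simp add: iota_mult_left iota_def[of \<beta>]) (simp add: iota_def algebra_simps)

lemma iota_zero: "iota 0 = \<one>\<^bsub>E\<^esub>"
  by (simp add: iota_def ext_one)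

lemma iota_eq_iff: "iota \<alpha> = iota \<beta> \<longleftrightarrow> \<alpha> - \<beta> \<in> \<int>"
  by (simp add: iota_def frac_eq_iff_diff_Ints)

lemma iota_eq_one_iff: "iota \<alpha> = \<one>\<^bsub>E\<^esub> \<longleftrightarrow> \<alpha> \<in> \<int>"
  using iota_eq_iff[of \<alpha> 0] by (simp add: iota_zero)

lemma iota_nat_pow: "iota \<alpha> [^]\<^bsub>E\<^esub> (k::nat) = iota (of_nat k * \<alpha>)"
  by (induct k) (simp_all add: iota_zero iota_mult algebra_simps)

lemma iota_inv: "inv\<^bsub>E\<^esub> (iota \<alpha>) = iota (- \<alpha>)"
  using group.inv_equality[OF group_ext, of "iota (- \<alpha>)" "iota \<alpha>"] by (simp add: iota_mult iota_zero)

lemma iota_int_pow: "iota \<alpha> [^]\<^bsub>E\<^esub> (k::int) = iota (of_int k * \<alpha>)"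
proof (cases k rule: int_cases2)
  case (nonneg n)
  thus ?thesis by (simp add: int_pow_int iota_nat_pow)
next
  case (nonpos n)
  thus ?thesis using group.int_pow_neg_int[OF group_ext, of "iota \<alpha>" n] by (simp add: iota_nat_pow iota_inv)
qed

lemma iota_mult_shuffle:
  assumes "A \<in> carrier E" "B \<in> carrier E"
  shows "(A ** iota \<alpha>) ** (B ** iota \<beta>) = (A ** B) ** iota (\<alpha> + \<beta>)"
proof -
  interpret Eg: group E by (rule group_ext)
  have "(A ** iota \<alpha>) ** (B ** iota \<beta>) = A ** (iota \<alpha> ** B) ** iota \<beta>"
    using assms by (simp add: Eg.m_assoc)
  also have "\<dots> = A ** (B ** iota \<alpha>) ** iota \<beta>" by (simp only: iota_central[OF assms(2)])
  also have "\<dots> = (A ** B) ** (iota \<alpha> ** iota \<beta>)" using assms by (simp add: Eg.m_assoc)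
  finally show ?thesis by (simp add: iota_mult)
qed

lemma iota_mult_move:
  assumes "P \<in> carrier E" "Q \<in> carrier E" shows "(P ** iota \<alpha>) ** Q = (P ** Q) ** iota \<alpha>"
proof -
  interpret Eg: group E by (rule group_ext)
  have "(P ** iota \<alpha>) ** Q = P ** (iota \<alpha> ** Q)" using assms by (simp add: Eg.m_assoc)
  also have "\<dots> = P ** (Q ** iota \<alpha>)" by (simp only: iota_central[OF assms(2)])
  finally show ?thesis using assms by (simp add: Eg.m_assoc)
qed

lemma snd_hom: "snd \<in> hom E S"
  by (rule homI) (auto simp: ext_carrier_iff ext_mult)

lemma snd_iota [simp]: "snd (iota \<alpha>) = \<one>"
  by (simp add: iota_def)

lemma snd_ext_mult: "snd (x ** y) = snd x \<otimes> snd y"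
  by (cases x, cases y) (simp add: ext_mult)

lemma snd_ext_nat_pow: "x \<in> carrier E \<Longrightarrow> snd (x [^]\<^bsub>E\<^esub> (k::nat)) = snd x [^] k"
  using hom_nat_pow[OF snd_hom _ group_ext is_group] by simp

lemma snd_dihedral_word:
  "Y \<in> carrier E \<Longrightarrow> snd (dihedral_word E Y T p) = dihedral_word S (snd Y) (snd T) p"
  by (cases p) (simp add: dihedral_word_def snd_ext_mult snd_ext_nat_pow ext_one)

lemma fiber_iota:
  assumes "x \<in> carrier E" "snd x = \<one>" obtains \<alpha> where "x = iota \<alpha>"
proof
  show "x = iota (fst x + u \<one> \<one>)" using assms by (cases x) (simp add: iota_def ext_carrier_iff)
qed

lemma zero_lift_carrier: "g \<in> carrier S \<Longrightarrow> (0, g) \<in> carrier E"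
  by (simp add: ext_carrier_iff)

lemma cohomologous_to_int_if_section:
  assumes "\<And>g. g \<in> carrier S \<Longrightarrow> \<sigma> g \<in> carrier E"
    and "\<And>g. g \<in> carrier S \<Longrightarrow> snd (\<sigma> g) = g"
    and "\<And>a b. a \<in> carrier S \<Longrightarrow> b \<in> carrier S \<Longrightarrow> \<sigma> (a \<otimes> b) = \<sigma> a ** \<sigma> b"
  shows "cohomologous_to_int S u"
  unfolding cohomologous_to_int_def
proof (intro exI ballI)
  fix a b assume ab: "a \<in> carrier S" "b \<in> carrier S"
  obtain qa qb qab where \<sigma>: "\<sigma> a = (qa, a)" "\<sigma> b = (qb, b)" "\<sigma> (a \<otimes> b) = (qab, a \<otimes> b)"
    using assms(2)[OF ab(1)] assms(2)[OF ab(2)] assms(2)[of "a \<otimes> b"] ab by (metis m_closed prod.collapse)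
  have "qab \<in> {0..<1}" using assms(1)[of "a \<otimes> b"] ab \<sigma> by (simp add: ext_carrier_iff)
  moreover have "(qab, a \<otimes> b) = (frac (qa + qb + u a b), a \<otimes> b)"
    using assms(3)[OF ab] \<sigma> by (simp add: ext_mult)
  ultimately have "frac (qa + qb + u a b) = frac qab" by simp
  thus "u a b + fst (\<sigma> a) + fst (\<sigma> b) - fst (\<sigma> (a \<otimes> b)) \<in> \<int>"
    using \<sigma> by (simp add: frac_eq_iff_diff_Ints algebra_simps)
qed

text \<open>A normal form \<open>\<phi>\<close> of \<open>S\<close> whose multiplication is mirrored by lifts \<open>\<psi>\<close> in \<open>E\<close>
  yields the section \<open>\<psi> \<circ> \<phi>\<inverse>\<close>.\<close>
lemma cohomologous_to_int_if_lift:
  assumes bij: "bij_betw \<phi> A (carrier S)"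
    and \<psi>: "\<And>a. a \<in> A \<Longrightarrow> \<psi> a \<in> carrier E" "\<And>a. a \<in> A \<Longrightarrow> snd (\<psi> a) = \<phi> a"
    and mult: "\<And>a b. a \<in> A \<Longrightarrow> b \<in> A \<Longrightarrow> \<exists>c\<in>A. \<phi> a \<otimes> \<phi> b = \<phi> c \<and> \<psi> a ** \<psi> b = \<psi> c"
  shows "cohomologous_to_int S u"
proof -
  let ?\<phi>' = "the_inv_into A \<phi>"
  have inv: "?\<phi>' g \<in> A" "\<phi> (?\<phi>' g) = g" if "g \<in> carrier S" for g
    using that bij bij_betw_the_inv_into bij_betwE f_the_inv_into_f_bij_betw by fastforce+
  have inv_\<phi>: "?\<phi>' (\<phi> a) = a" if "a \<in> A" for a
    using that bij by (simp add: bij_betw_def the_inv_into_f_f)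
  show ?thesis
  proof (rule cohomologous_to_int_if_section)
    fix g assume "g \<in> carrier S"
    thus "\<psi> (?\<phi>' g) \<in> carrier E" "snd (\<psi> (?\<phi>' g)) = g" using inv \<psi> by auto
  next
    fix x y assume xy: "x \<in> carrier S" "y \<in> carrier S"
    obtain a b where ab: "a \<in> A" "b \<in> A" "x = \<phi> a" "y = \<phi> b"
      using xy bij by (metis bij_betw_imp_surj_on imageE)
    obtain c where c: "c \<in> A" "\<phi> a \<otimes> \<phi> b = \<phi> c" "\<psi> a ** \<psi> b = \<psi> c" using mult[OF ab(1,2)] by blast
    show "\<psi> (?\<phi>' (x \<otimes> y)) = \<psi> (?\<phi>' x) ** \<psi> (?\<phi>' y)"
      using ab c by (simp add: inv_\<phi>)
  qed
qed

lemma ext_commutator: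
  assumes P: "P \<in> carrier E" and T: "T \<in> carrier E" and c: "snd P \<otimes> snd T = snd T \<otimes> snd P"
  shows "P ** T = iota (u (snd P) (snd T) - u (snd T) (snd P)) ** (T ** P)"
proof -
  obtain p a q b where PT: "P = (p, a)" "T = (q, b)" by (cases P, cases T)
  have a: "a \<in> carrier S" "b \<in> carrier S" using P T PT by (auto simp: ext_carrier_iff)
  have "iota (u a b - u b a) ** (T ** P) = (frac (p + q + u a b), b \<otimes> a)"
    using a frac_add_simps(2)[of "u a b - u b a" "q + p + u b a"]
    by (simp add: PT ext_mult iota_mult_left algebra_simps)
  thus ?thesis using c by (simp add: PT ext_mult)
qed

end

text \<open>Solving \<open>z + m\<alpha> \<in> \<int>\<close> and \<open>c + 2\<alpha> \<in> \<int>\<close>: take \<open>\<alpha> = -c/2\<close>, or \<open>\<alpha> = (1 - c)/2\<close> when the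
  integer \<open>2z - mc\<close> is odd, which the hypotheses only allow for odd \<open>m\<close>.\<close>
lemma dihedral_correction:
  fixes z c \<beta> :: real and m :: nat
  assumes rel: "2 * z - real m * c \<in> \<int>"
    and half: "even m \<Longrightarrow> \<beta> + z - real (m div 2) * c \<in> \<int>"
    and cond: "odd m \<or> \<beta> \<in> \<int>"
  obtains \<alpha> where "z + real m * \<alpha> \<in> \<int>" "c + 2 * \<alpha> \<in> \<int>"
proof -
  obtain N where N: "2 * z - real m * c = of_int N" using rel by (auto elim: Ints_cases)
  show ?thesis
  proof (cases "even N")
    case True
    then obtain t where "N = 2 * t" by (elim evenE)
    hence "z + real m * (- c / 2) = of_int t" using N by (simp add: field_simps)
    thus ?thesis using that[of "- c / 2"] by simp
  next
    case False
    have "odd m"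
    proof
      assume em: "even m"
      then obtain k where k: "m = 2 * k" by (elim evenE)
      have "\<beta> + z - real k * c \<in> \<int>" "\<beta> \<in> \<int>" using half cond em k by auto
      hence "(\<beta> + z - real k * c) - \<beta> \<in> \<int>" by (rule Ints_diff)
      then obtain t where "z - real k * c = of_int t" by (auto elim: Ints_cases)
      hence "of_int N = (of_int (2 * t) :: real)" using N k by (simp add: algebra_simps)
      hence "N = 2 * t" by (simp only: of_int_eq_iff)
      thus False using False by simp
    qed
    then obtain t where t: "N + int m = 2 * t" using False by (metis even_add even_of_nat evenE)
    have "of_int N + real m = 2 * of_int t" using t by (metis of_int_add of_int_mult of_int_of_nat_eq of_int_numeral)
    hence "z + real m * ((1 - c) / 2) = of_int t" using N by (simp add: field_simps)
    moreover have "c + 2 * ((1 - c) / 2) = 1" by (simp add: field_simps)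
    ultimately show ?thesis using that[of "(1 - c) / 2"] by simp
  qed
qed

context circle_extension
begin

lemma lift_of_finite_order:
  assumes \<rho>: "\<rho> \<in> carrier S" and m: "0 < m" "\<rho> [^] (m::nat) = \<one>"
  obtains Y where "Y \<in> carrier E" "snd Y = \<rho>" "Y [^]\<^bsub>E\<^esub> m = \<one>\<^bsub>E\<^esub>"
proof -
  interpret Eg: group E by (rule group_ext)
  define Y0 where "Y0 = (0::real, \<rho>)"
  have Y0: "Y0 \<in> carrier E" using \<rho> by (simp add: Y0_def zero_lift_carrier)
  have "snd (Y0 [^]\<^bsub>E\<^esub> m) = \<one>" unfolding snd_ext_nat_pow[OF Y0] using m by (simp add: Y0_def)
  then obtain z where z: "Y0 [^]\<^bsub>E\<^esub> m = iota z" by (rule fiber_iota[OF Eg.nat_pow_closed[OF Y0]])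
  show ?thesis
  proof (rule that[of "Y0 ** iota (- z / m)"])
    show "Y0 ** iota (- z / m) \<in> carrier E" using Y0 by simp
    show "snd (Y0 ** iota (- z / m)) = \<rho>" using \<rho> by (simp add: snd_ext_mult Y0_def)
    have "(Y0 ** iota (- z / m)) [^]\<^bsub>E\<^esub> m = Y0 [^]\<^bsub>E\<^esub> m ** iota (- z / m) [^]\<^bsub>E\<^esub> m"
      by (rule Eg.pow_mult_distrib[OF iota_central[OF Y0, symmetric] Y0 iota_carrier])
    also have "\<dots> = iota 0" using m by (simp add: z iota_nat_pow iota_mult)
    finally show "(Y0 ** iota (- z / m)) [^]\<^bsub>E\<^esub> m = \<one>\<^bsub>E\<^esub>" by (simp add: iota_zero)
  qed
qed

lemma cohomologous_to_int_cyclic: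
  assumes \<rho>: "\<rho> \<in> carrier S" and m: "0 < m" "\<rho> [^] (m::nat) = \<one>"
    and nf: "bij_betw (\<lambda>i. \<rho> [^] i) {..<m} (carrier S)"
  shows "cohomologous_to_int S u"
proof -
  interpret Eg: group E by (rule group_ext)
  obtain Y where Y: "Y \<in> carrier E" "snd Y = \<rho>" "Y [^]\<^bsub>E\<^esub> m = \<one>\<^bsub>E\<^esub>"
    using lift_of_finite_order[OF \<rho> m] .
  show ?thesis
  proof (rule cohomologous_to_int_if_lift[OF nf, of "\<lambda>i. Y [^]\<^bsub>E\<^esub> i"])
    fix i j assume "i \<in> {..<m}" "j \<in> {..<m}"
    have "\<rho> [^] i \<otimes> \<rho> [^] j = \<rho> [^] ((i + j) mod m)"
      using \<rho> nat_pow_mod_order[OF \<rho> m(2), of "i + j"] by (simp add: nat_pow_mult)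
    moreover have "Y [^]\<^bsub>E\<^esub> i ** Y [^]\<^bsub>E\<^esub> j = Y [^]\<^bsub>E\<^esub> ((i + j) mod m)"
      using Y Eg.nat_pow_mod_order[OF Y(1,3), of "i + j"] by (simp add: Eg.nat_pow_mult)
    ultimately show "\<exists>c\<in>{..<m}. \<rho> [^] i \<otimes> \<rho> [^] j = \<rho> [^] c \<and> Y [^]\<^bsub>E\<^esub> i ** Y [^]\<^bsub>E\<^esub> j = Y [^]\<^bsub>E\<^esub> c"
      using m(1) by auto
  qed (use Y in \<open>auto simp: snd_ext_nat_pow\<close>)
qed

lemma lift_involution:
  assumes \<tau>: "\<tau> \<in> carrier S" "\<tau> \<otimes> \<tau> = \<one>"
  obtains T where "T \<in> carrier E" "snd T = \<tau>" "T ** T = \<one>\<^bsub>E\<^esub>"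
proof -
  interpret Eg: group E by (rule group_ext)
  define T0 where "T0 = (0::real, \<tau>)"
  have T0: "T0 \<in> carrier E" using \<tau> by (simp add: T0_def zero_lift_carrier)
  have "snd (T0 ** T0) = \<one>" using \<tau> by (simp add: T0_def snd_ext_mult)
  then obtain w where w: "T0 ** T0 = iota w" by (rule fiber_iota[OF Eg.m_closed[OF T0 T0]])
  show ?thesis
  proof (rule that[of "T0 ** iota (- w / 2)"])
    show "T0 ** iota (- w / 2) \<in> carrier E" using T0 by simp
    show "snd (T0 ** iota (- w / 2)) = \<tau>" using \<tau> by (simp add: T0_def snd_ext_mult)
    have "(T0 ** iota (- w / 2)) ** (T0 ** iota (- w / 2)) = (T0 ** T0) ** iota (- w / 2 + - w / 2)"
      by (rule iota_mult_shuffle[OF T0 T0])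
    also have "\<dots> = iota 0" by (simp add: w iota_mult)
    finally show "(T0 ** iota (- w / 2)) ** (T0 ** iota (- w / 2)) = \<one>\<^bsub>E\<^esub>" by (simp add: iota_zero)
  qed
qed

lemma involution_conj_iota:
  assumes "T \<in> carrier E" "T ** T = \<one>\<^bsub>E\<^esub>" shows "T ** iota \<gamma> ** T = iota \<gamma>"
proof -
  interpret Eg: group E by (rule group_ext)
  have "T ** iota \<gamma> ** T = iota \<gamma> ** (T ** T)"
    using assms by (simp only: iota_central[OF assms(1), symmetric] Eg.m_assoc iota_carrier)
  thus ?thesis using assms by simp
qed

lemma involution_conj_lift_int_pow:
  assumes Y: "Y \<in> carrier E" and T: "T \<in> carrier E" "T ** T = \<one>\<^bsub>E\<^esub>"
    and c: "T ** Y ** T ** Y = iota c"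
  shows "T ** Y [^]\<^bsub>E\<^esub> (k::int) ** T = iota (of_int k * c) ** inv\<^bsub>E\<^esub> (Y [^]\<^bsub>E\<^esub> k)"
proof -
  interpret Eg: group E by (rule group_ext)
  have "T ** Y ** T = (T ** Y ** T ** Y) ** inv\<^bsub>E\<^esub> Y" using T Y by (simp add: Eg.m_assoc)
  hence C: "T ** Y ** T = iota c ** inv\<^bsub>E\<^esub> Y" by (simp add: c)
  have "T ** Y [^]\<^bsub>E\<^esub> k ** T = (T ** Y ** T) [^]\<^bsub>E\<^esub> k" by (rule Eg.involution_conj_int_pow[OF T Y])
  also have "\<dots> = iota c [^]\<^bsub>E\<^esub> k ** (inv\<^bsub>E\<^esub> Y) [^]\<^bsub>E\<^esub> k"
    unfolding C by (rule Eg.int_pow_mult_distrib) (simp_all add: Y iota_central)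
  finally show ?thesis by (simp add: iota_int_pow Eg.int_pow_inv Y)
qed

lemma dihedral_lift_relation:
  assumes Y: "Y \<in> carrier E" and T: "T \<in> carrier E" "T ** T = \<one>\<^bsub>E\<^esub>"
    and z: "Y [^]\<^bsub>E\<^esub> (m::nat) = iota z" and c: "T ** Y ** T ** Y = iota c"
  shows "2 * z - real m * c \<in> \<int>"
proof -
  have "iota z = T ** Y [^]\<^bsub>E\<^esub> (int m) ** T" using T by (simp add: int_pow_int z involution_conj_iota)
  also have "\<dots> = iota (real m * c - z)"
    using involution_conj_lift_int_pow[OF Y T c, of "int m"] by (simp add: int_pow_int z iota_inv iota_mult)
  finally have "z - (real m * c - z) \<in> \<int>" by (simp add: iota_eq_iff)
  thus ?thesis by (simp add: algebra_simps)
qed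

text \<open>The half turn \<open>x = \<rho>\<^sup>k\<close> commutes with \<open>\<tau>\<close>, so by \<open>ext_commutator\<close> the lifts of \<open>x\<close> and \<open>\<tau>\<close>
  commute up to \<open>\<beta> = u x \<tau> - u \<tau> x\<close>; comparing with the conjugation formula gives \<open>\<beta>\<close> mod \<open>\<int>\<close>.\<close>
lemma dihedral_lift_half_turn:
  assumes Y: "Y \<in> carrier E" "snd Y = \<rho>" and T: "T \<in> carrier E" "snd T = \<tau>" "T ** T = \<one>\<^bsub>E\<^esub>"
    and x\<tau>: "\<rho> [^] k \<otimes> \<tau> = \<tau> \<otimes> \<rho> [^] k"
    and z: "Y [^]\<^bsub>E\<^esub> (2 * k) = iota z" and c: "T ** Y ** T ** Y = iota c"
  shows "u (\<rho> [^] k) \<tau> - u \<tau> (\<rho> [^] k) + z - real k * c \<in> \<int>"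
proof -
  interpret Eg: group E by (rule group_ext)
  define R where "R = Y [^]\<^bsub>E\<^esub> k"
  define \<beta> where "\<beta> = u (\<rho> [^] k) \<tau> - u \<tau> (\<rho> [^] k)"
  have R: "R \<in> carrier E" "snd R = \<rho> [^] k" using Y by (simp_all add: R_def snd_ext_nat_pow)
  have "R ** T = iota \<beta> ** (T ** R)" using ext_commutator[OF R(1) T(1)] R T x\<tau> by (simp add: \<beta>_def)
  hence "T ** R ** T = (T ** iota \<beta> ** T) ** R" using R T by (simp add: Eg.m_assoc)
  hence "iota \<beta> ** R = iota (real k * c) ** inv\<^bsub>E\<^esub> R"
    using involution_conj_lift_int_pow[OF Y(1) T(1,3) c, of "int k"] T
    by (simp add: R_def int_pow_int involution_conj_iota)
  hence "iota \<beta> ** R ** R = iota (real k * c) ** (inv\<^bsub>E\<^esub> R ** R)" using R by (simp add: Eg.m_assoc)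
  hence "iota \<beta> ** (R ** R) = iota (real k * c)" using R by (simp add: Eg.m_assoc)
  moreover have "R ** R = iota z" using Y z by (simp add: R_def Eg.nat_pow_mult mult_2)
  ultimately have "iota (\<beta> + z) = iota (real k * c)" by (simp add: iota_mult)
  thus ?thesis by (simp add: iota_eq_iff \<beta>_def)
qed

lemma cohomologous_to_int_if_dihedral_lift:
  assumes rel: "dihedral_relations S \<rho> \<tau> m" and m: "0 < m"
    and nf: "bij_betw (dihedral_word S \<rho> \<tau>) ({..<m} \<times> UNIV) (carrier S)"
    and relE: "dihedral_relations E Y T m" and lift: "snd Y = \<rho>" "snd T = \<tau>"
  shows "cohomologous_to_int S u"
proof -
  interpret Eg: group E by (rule group_ext)
  have Y: "Y \<in> carrier E" and T: "T \<in> carrier E" using relE by (simp_all add: dihedral_relations_def)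
  show ?thesis
  proof (rule cohomologous_to_int_if_lift[OF nf, of "dihedral_word E Y T"])
    fix p :: "nat \<times> bool" assume "p \<in> {..<m} \<times> UNIV"
    show "dihedral_word E Y T p \<in> carrier E" using Y T by (cases p) (simp add: dihedral_word_def)
    show "snd (dihedral_word E Y T p) = dihedral_word S \<rho> \<tau> p" using Y lift by (simp add: snd_dihedral_word)
  next
    fix p q :: "nat \<times> bool" assume "p \<in> {..<m} \<times> UNIV" "q \<in> {..<m} \<times> UNIV"
    show "\<exists>r\<in>{..<m} \<times> UNIV. dihedral_word S \<rho> \<tau> p \<otimes> dihedral_word S \<rho> \<tau> q = dihedral_word S \<rho> \<tau> r
        \<and> dihedral_word E Y T p ** dihedral_word E Y T q = dihedral_word E Y T r"
    proof (intro bexI conjI)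
      show "dihedral_word S \<rho> \<tau> p \<otimes> dihedral_word S \<rho> \<tau> q = dihedral_word S \<rho> \<tau> (dihedral_index m p q)"
        by (rule dihedral_word_mult[OF rel m])
      show "dihedral_word E Y T p ** dihedral_word E Y T q = dihedral_word E Y T (dihedral_index m p q)"
        by (rule Eg.dihedral_word_mult[OF relE m])
    qed (rule dihedral_index_lessThan[OF m])
  qed
qed

text \<open>The congruences for the defects \<open>z\<close>, \<open>c\<close> come from conjugating \<open>Y\<^sup>m\<close> and \<open>Y\<^sup>m\<^sup>/\<^sup>2\<close> by \<open>T\<close>.\<close>
lemma dihedral_lift_invariants:
  assumes rel: "dihedral_relations S \<rho> \<tau> m"
  obtains Y T z c where "Y \<in> carrier E" "snd Y = \<rho>" "T \<in> carrier E" "snd T = \<tau>" "T ** T = \<one>\<^bsub>E\<^esub>"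
    "Y [^]\<^bsub>E\<^esub> m = iota z" "T ** Y ** T ** Y = iota c" "2 * z - real m * c \<in> \<int>"
    "even m \<Longrightarrow> u (\<rho> [^] (m div 2)) \<tau> - u \<tau> (\<rho> [^] (m div 2)) + z - real (m div 2) * c \<in> \<int>"
proof -
  interpret Eg: group E by (rule group_ext)
  have \<rho>: "\<rho> \<in> carrier S" and \<tau>: "\<tau> \<in> carrier S" "\<tau> \<otimes> \<tau> = \<one>"
    using rel by (auto simp: dihedral_relations_def)
  obtain T where T: "T \<in> carrier E" "snd T = \<tau>" "T ** T = \<one>\<^bsub>E\<^esub>" using lift_involution[OF \<tau>] .
  define Y where "Y = (0::real, \<rho>)"
  have Y: "Y \<in> carrier E" "snd Y = \<rho>" using \<rho> by (simp_all add: Y_def zero_lift_carrier)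
  have "snd (Y [^]\<^bsub>E\<^esub> m) = \<one>" using rel Y by (simp add: snd_ext_nat_pow dihedral_relations_def)
  then obtain z where z: "Y [^]\<^bsub>E\<^esub> m = iota z" by (rule fiber_iota[OF Eg.nat_pow_closed[OF Y(1)]])
  have "T ** Y ** T ** Y \<in> carrier E" using T Y by simp
  moreover have "snd (T ** Y ** T ** Y) = \<one>" using rel T Y by (simp add: snd_ext_mult dihedral_relations_def)
  ultimately obtain c where c: "T ** Y ** T ** Y = iota c" by (rule fiber_iota)
  have "u (\<rho> [^] (m div 2)) \<tau> - u \<tau> (\<rho> [^] (m div 2)) + z - real (m div 2) * c \<in> \<int>" if "even m"
  proof -
    obtain k where k: "m = 2 * k" using \<open>even m\<close> by (elim evenE)
    have r2: "dihedral_relations S \<rho> \<tau> (2 * k)" and z2: "Y [^]\<^bsub>E\<^esub> (2 * k) = iota z"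
      using rel z k by simp_all
    show ?thesis using dihedral_lift_half_turn[OF Y T dihedral_half_turn_commute[OF r2] z2 c] k by simp
  qed
  with that[OF Y T z c dihedral_lift_relation[OF Y(1) T(1,3) z c]] show ?thesis by blast
qed

lemma cohomologous_to_int_dihedral:
  assumes rel: "dihedral_relations S \<rho> \<tau> m" and m: "0 < m"
    and nf: "bij_betw (dihedral_word S \<rho> \<tau>) ({..<m} \<times> UNIV) (carrier S)"
    and cond: "odd m \<or> u (\<rho> [^] (m div 2)) \<tau> - u \<tau> (\<rho> [^] (m div 2)) \<in> \<int>"
  shows "cohomologous_to_int S u"
proof -
  interpret Eg: group E by (rule group_ext)
  obtain Y0 T z c where Y0: "Y0 \<in> carrier E" "snd Y0 = \<rho>" and T: "T \<in> carrier E" "snd T = \<tau>" "T ** T = \<one>\<^bsub>E\<^esub>"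
    and z: "Y0 [^]\<^bsub>E\<^esub> m = iota z" and c: "T ** Y0 ** T ** Y0 = iota c"
    and inv: "2 * z - real m * c \<in> \<int>"
      "even m \<Longrightarrow> u (\<rho> [^] (m div 2)) \<tau> - u \<tau> (\<rho> [^] (m div 2)) + z - real (m div 2) * c \<in> \<int>"
    using dihedral_lift_invariants[OF rel] by blast
  obtain \<alpha> where \<alpha>: "z + real m * \<alpha> \<in> \<int>" "c + 2 * \<alpha> \<in> \<int>"
    using dihedral_correction[OF inv cond] by blast
  define Y where "Y = Y0 ** iota \<alpha>"
  have Y: "Y \<in> carrier E" "snd Y = \<rho>" using Y0 rel by (simp_all add: Y_def snd_ext_mult dihedral_relations_def)
  have "Y [^]\<^bsub>E\<^esub> m = Y0 [^]\<^bsub>E\<^esub> m ** iota \<alpha> [^]\<^bsub>E\<^esub> m"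
    unfolding Y_def by (rule Eg.pow_mult_distrib[OF iota_central[OF Y0(1), symmetric] Y0(1) iota_carrier])
  hence "Y [^]\<^bsub>E\<^esub> m = \<one>\<^bsub>E\<^esub>" using \<alpha>(1) by (simp add: z iota_nat_pow iota_mult iota_eq_one_iff)
  moreover have "T ** Y ** T ** Y = (T ** Y0 ** T ** Y0) ** iota (\<alpha> + \<alpha>)"
  proof -
    have "T ** Y = (T ** Y0) ** iota \<alpha>" using T Y0 by (simp add: Y_def Eg.m_assoc)
    hence "T ** Y ** T = (T ** Y0 ** T) ** iota \<alpha>" using T Y0 by (simp add: iota_mult_move)
    thus ?thesis unfolding Y_def using T Y0 by (simp add: iota_mult_shuffle)
  qed
  hence "T ** Y ** T ** Y = iota (c + 2 * \<alpha>)" by (simp only: c iota_mult mult_2)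
  hence "T ** Y ** T ** Y = \<one>\<^bsub>E\<^esub>" using \<alpha>(2) by (simp add: iota_eq_one_iff)
  ultimately have "dihedral_relations E Y T m" using Y T by (simp add: dihedral_relations_def)
  thus ?thesis using cohomologous_to_int_if_dihedral_lift[OF rel m nf] Y T by blast
qed

lemma dihedral_commutator_half_Ints:
  assumes rel: "dihedral_relations S \<rho> \<tau> m" and ev: "even m"
  shows "2 * (u (\<rho> [^] (m div 2)) \<tau> - u \<tau> (\<rho> [^] (m div 2))) \<in> \<int>"
proof -
  obtain z c :: real where rel_inv: "2 * z - real m * c \<in> \<int>"
    and half: "u (\<rho> [^] (m div 2)) \<tau> - u \<tau> (\<rho> [^] (m div 2)) + z - real (m div 2) * c \<in> \<int>"
    using dihedral_lift_invariants[OF rel] ev by metis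
  have "2 * (u (\<rho> [^] (m div 2)) \<tau> - u \<tau> (\<rho> [^] (m div 2)) + z - real (m div 2) * c) - (2 * z - real m * c) \<in> \<int>"
    by (rule Ints_diff[OF Ints_mult[OF _ half] rel_inv]) simp
  thus ?thesis using ev by (simp add: algebra_simps real_of_nat_div)
qed

end

section \<open>Klein four subgroups\<close>

lemma klein4_mult: "(p, q) \<otimes>\<^bsub>klein4\<^esub> (r, s) = (p \<noteq> r, q \<noteq> s)"
  by (simp add: klein4_def)

lemma klein4_carrier: "carrier klein4 = UNIV"
  by (simp add: klein4_def)

lemma (in group) subgroup_commuting_involutions:
  assumes a: "a \<in> carrier G" and b: "b \<in> carrier G" and aa: "a \<otimes> a = \<one>" and bb: "b \<otimes> b = \<one>"
    and ab: "a \<otimes> b = b \<otimes> a"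
  shows "subgroup {\<one>, a, b, a \<otimes> b} G"
proof (rule subgroupI)
  show "{\<one>, a, b, a \<otimes> b} \<subseteq> carrier G" using a b by auto
next
  have "b \<otimes> (a \<otimes> b) = a" using a b bb ab by (simp add: m_assoc[symmetric])
  hence "(a \<otimes> b) \<otimes> (a \<otimes> b) = \<one>" using a b aa by (simp add: m_assoc)
  hence "inv (a \<otimes> b) = a \<otimes> b" using a b by (simp add: inv_equality)
  moreover have "inv a = a" "inv b = b" using a b aa bb by (simp_all add: inv_equality)
  ultimately show "inv x \<in> {\<one>, a, b, a \<otimes> b}" if "x \<in> {\<one>, a, b, a \<otimes> b}" for x
    using that by auto
next
  have "a \<otimes> (a \<otimes> b) = b" using a b aa by (simp add: m_assoc[symmetric])
  moreover have "(a \<otimes> b) \<otimes> a = b" using a b aa ab by (simp add: m_assoc)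
  moreover have "b \<otimes> (a \<otimes> b) = a" using a b bb ab by (simp add: m_assoc[symmetric])
  moreover have "(a \<otimes> b) \<otimes> b = a" using a b bb by (simp add: m_assoc)
  moreover have "(a \<otimes> b) \<otimes> (a \<otimes> b) = \<one>" using a b aa \<open>b \<otimes> (a \<otimes> b) = a\<close> by (simp add: m_assoc)
  ultimately show "x \<otimes> y \<in> {\<one>, a, b, a \<otimes> b}" if "x \<in> {\<one>, a, b, a \<otimes> b}" "y \<in> {\<one>, a, b, a \<otimes> b}" for x y
    using that a b aa bb ab[symmetric] by auto
qed simp

lemma (in group) klein_subgroupI:
  assumes a: "a \<in> carrier G" and b: "b \<in> carrier G" and aa: "a \<otimes> a = \<one>" and bb: "b \<otimes> b = \<one>"
    and ab: "a \<otimes> b = b \<otimes> a" and a1: "a \<noteq> \<one>" and b1: "b \<noteq> \<one>" and anb: "a \<noteq> b"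
  shows "klein_subgroup G {\<one>, a, b, a \<otimes> b}"
proof -
  let ?K = "{\<one>, a, b, a \<otimes> b}"
  have f1: "a \<otimes> (a \<otimes> b) = b" using a b aa by (simp add: m_assoc[symmetric])
  have f2: "(a \<otimes> b) \<otimes> a = b" using a b aa ab by (simp add: m_assoc)
  have f3: "b \<otimes> (a \<otimes> b) = a" using a b bb ab by (simp add: m_assoc[symmetric])
  have f4: "(a \<otimes> b) \<otimes> b = a" using a b bb by (simp add: m_assoc)
  have f5: "(a \<otimes> b) \<otimes> (a \<otimes> b) = \<one>" using a b f3 aa by (simp add: m_assoc)
  have distinct: "a \<otimes> b \<noteq> \<one>" "a \<otimes> b \<noteq> a" "a \<otimes> b \<noteq> b"
    using f1 f4 a b aa bb a1 b1 anb by (metis r_one)+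
  note facts = f1 f2 f3 f4 f5 ab[symmetric] aa bb
  define \<phi> where "\<phi> x = (x = a \<or> x = a \<otimes> b, x = b \<or> x = a \<otimes> b)" for x
  have v: "\<phi> \<one> = (False, False)" "\<phi> a = (True, False)" "\<phi> b = (False, True)" "\<phi> (a \<otimes> b) = (True, True)"
    using distinct a1 b1 anb by (auto simp: \<phi>_def)
  have hom: "\<phi> \<in> hom (G\<lparr>carrier := ?K\<rparr>) klein4"
  proof (rule homI)
    fix x y assume "x \<in> carrier (G\<lparr>carrier := ?K\<rparr>)" "y \<in> carrier (G\<lparr>carrier := ?K\<rparr>)"
    hence "x \<in> ?K" "y \<in> ?K" by simp_all
    thus "\<phi> (x \<otimes>\<^bsub>G\<lparr>carrier := ?K\<rparr>\<^esub> y) = \<phi> x \<otimes>\<^bsub>klein4\<^esub> \<phi> y"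
      by (elim insertE emptyE) (simp_all add: v klein4_mult a b facts)
  qed (simp add: klein4_carrier)
  have "inj_on \<phi> ?K" using distinct a1 b1 anb unfolding inj_on_def \<phi>_def by auto
  moreover have "\<phi> ` ?K = UNIV" using v by (auto simp: UNIV_bool image_iff)
  ultimately have bij: "bij_betw \<phi> (carrier (G\<lparr>carrier := ?K\<rparr>)) (carrier klein4)"
    by (simp add: bij_betw_def klein4_carrier)
  show ?thesis unfolding klein_subgroup_def
    using subgroup_commuting_involutions[OF a b aa bb ab] isoI[OF hom bij] by (auto simp: is_iso_def)
qed

lemma (in group) klein_subgroupD:
  assumes K: "klein_subgroup G K"
  shows "finite K" "card K = 4" "\<And>g. g \<in> K \<Longrightarrow> g \<otimes> g = \<one>"
proof -
  have sub: "subgroup K G" and iso: "G\<lparr>carrier := K\<rparr> \<cong> klein4" using K by (auto simp: klein_subgroup_def)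
  obtain \<phi> where \<phi>: "\<phi> \<in> iso (G\<lparr>carrier := K\<rparr>) klein4" using iso unfolding is_iso_def by blast
  have hom: "\<phi> (x \<otimes> y) = \<phi> x \<otimes>\<^bsub>klein4\<^esub> \<phi> y" if "x \<in> K" "y \<in> K" for x y
    using \<phi> that unfolding iso_def hom_def by simp
  have bij: "bij_betw \<phi> K UNIV" using \<phi> by (auto simp: iso_def klein4_carrier)
  show "finite K" using bij_betw_finite[OF bij] by simp
  have "card K = card (UNIV :: (bool \<times> bool) set)" using bij by (rule bij_betw_same_card)
  also have "(UNIV :: (bool \<times> bool) set) = {(False, False), (False, True), (True, False), (True, True)}"
    by (auto simp: UNIV_bool)
  finally show "card K = 4" by simp
  have sq: "\<phi> (g \<otimes> g) = (False, False)" if "g \<in> K" for g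
    using hom[OF that that] by (cases "\<phi> g") (simp add: klein4_mult)
  fix g assume g: "g \<in> K"
  have "\<phi> (g \<otimes> g) = \<phi> \<one>" using sq[OF g] sq[OF subgroup.one_closed[OF sub]] by simp
  thus "g \<otimes> g = \<one>"
    using inj_onD[OF bij_betw_imp_inj_on[OF bij] _ subgroup.m_closed[OF sub g g] subgroup.one_closed[OF sub]]
    by simp
qed

lemma dihedral_carrier_iff: "x \<in> carrier (dihedral n) \<longleftrightarrow> 0 \<le> fst x \<and> fst x < int n"
  by (cases x) (simp add: dihedral_def)

lemma dihedral_mult:
  "(k1, b1) \<otimes>\<^bsub>dihedral n\<^esub> (k2, b2) = ((k1 + (if b1 then - k2 else k2)) mod int n, b1 \<noteq> b2)"
  by (simp add: dihedral_def)

lemma dihedral_one: "\<one>\<^bsub>dihedral n\<^esub> = (0, False)"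
  by (simp add: dihedral_def)

lemma snd_dihedral_mult: "snd (x \<otimes>\<^bsub>dihedral n\<^esub> y) = (snd x \<noteq> snd y)"
  by (cases x, cases y) (simp add: dihedral_mult)

lemma finite_dihedral: "finite (carrier (dihedral n))"
  by (rule finite_subset[of _ "{0..<int n} \<times> UNIV"]) (auto simp: dihedral_carrier_iff)

lemma group_dihedral:
  assumes "n \<ge> 1" shows "group (dihedral n)"
proof (rule groupI)
  fix x y assume "x \<in> carrier (dihedral n)" "y \<in> carrier (dihedral n)"
  thus "x \<otimes>\<^bsub>dihedral n\<^esub> y \<in> carrier (dihedral n)" using assms
    by (cases x, cases y) (simp add: dihedral_mult dihedral_carrier_iff)
next
  fix x y z :: "int \<times> bool"
  obtain k1 b1 k2 b2 k3 b3 where "x = (k1, b1)" "y = (k2, b2)" "z = (k3, b3)" by (cases x, cases y, cases z)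
  thus "x \<otimes>\<^bsub>dihedral n\<^esub> y \<otimes>\<^bsub>dihedral n\<^esub> z = x \<otimes>\<^bsub>dihedral n\<^esub> (y \<otimes>\<^bsub>dihedral n\<^esub> z)"
    by (cases b1; cases b2; simp add: dihedral_mult mod_simps algebra_simps)
next
  fix x assume x: "x \<in> carrier (dihedral n)"
  thus "\<one>\<^bsub>dihedral n\<^esub> \<otimes>\<^bsub>dihedral n\<^esub> x = x"
    by (cases x) (simp add: dihedral_one dihedral_mult dihedral_carrier_iff)
  obtain k b where kb: "x = (k, b)" by (cases x)
  define y where "y = (if b then (k, True) else ((- k) mod int n, False))"
  have "y \<in> carrier (dihedral n)" using x assms by (simp add: y_def kb dihedral_carrier_iff)
  moreover have "y \<otimes>\<^bsub>dihedral n\<^esub> x = \<one>\<^bsub>dihedral n\<^esub>"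
    by (cases b) (simp_all add: y_def kb dihedral_mult dihedral_one mod_simps)
  ultimately show "\<exists>y\<in>carrier (dihedral n). y \<otimes>\<^bsub>dihedral n\<^esub> x = \<one>\<^bsub>dihedral n\<^esub>" by blast
qed (use assms in \<open>simp add: dihedral_one dihedral_carrier_iff\<close>)

lemma dihedral_rotation_nat_pow: "(d, False) [^]\<^bsub>dihedral n\<^esub> (j::nat) = ((int j * d) mod int n, False)"
  by (induct j) (simp_all add: dihedral_one dihedral_mult mod_simps algebra_simps)

lemma dihedral_rotation_inv:
  "n \<ge> 1 \<Longrightarrow> 0 \<le> a \<Longrightarrow> a < int n \<Longrightarrow> inv\<^bsub>dihedral n\<^esub> (a, False) = ((- a) mod int n, False)"
  by (rule group.inv_equality[OF group_dihedral])
    (simp_all add: dihedral_mult dihedral_one dihedral_carrier_iff mod_simps)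

lemma dihedral_rotation_sq_one:
  assumes "(y, False) \<in> carrier (dihedral n)" "(y, False) \<otimes>\<^bsub>dihedral n\<^esub> (y, False) = \<one>\<^bsub>dihedral n\<^esub>"
  shows "y = 0 \<or> int n = 2 * y"
proof -
  have y: "0 \<le> y" "y < int n" using assms(1) by (simp_all add: dihedral_carrier_iff)
  have m0: "(y + y) mod int n = 0" using assms(2) by (simp add: dihedral_mult dihedral_one)
  show ?thesis
  proof (cases "y + y < int n")
    case True
    thus ?thesis using m0 y by (simp add: mod_pos_pos_trivial)
  next
    case False
    have "(y + y) mod int n = (y + y - int n) mod int n" using mod_add_self2[of "y + y - int n" "int n"] by simp
    also have "\<dots> = y + y - int n" by (rule mod_pos_pos_trivial) (use False y in linarith)+
    finally show ?thesis using m0 by simp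
  qed
qed

lemma dihedral_half_turn_reflection_commute:
  assumes "int n = 2 * x"
  shows "(x, False) \<otimes>\<^bsub>dihedral n\<^esub> (k, True) = (k, True) \<otimes>\<^bsub>dihedral n\<^esub> (x, False)"
proof -
  have "(x + k) mod int n = (k - x + int n) mod int n" by (simp add: assms algebra_simps)
  thus ?thesis by (simp add: dihedral_mult)
qed

lemma klein_subgroup_dihedral_two_reflections:
  assumes n: "n \<ge> 1" and K: "klein_subgroup (dihedral n) K"
  obtains k1 k2 where "k1 \<noteq> k2" "(k1, True) \<in> K" "(k2, True) \<in> K"
proof -
  interpret group "dihedral n" by (rule group_dihedral[OF n])
  have KG: "K \<subseteq> carrier (dihedral n)" using K subgroup.subset by (auto simp: klein_subgroup_def)
  define Rf where "Rf = {g \<in> K. snd g}"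
  have "K \<subseteq> {(0, False), (int n div 2, False)} \<union> Rf"
  proof
    fix g assume g: "g \<in> K"
    obtain y b where yb: "g = (y, b)" by (cases g)
    have "\<not> b \<Longrightarrow> y = 0 \<or> int n = 2 * y"
      using dihedral_rotation_sq_one[of y n] KG klein_subgroupD(3)[OF K g] g yb by auto
    thus "g \<in> {(0, False), (int n div 2, False)} \<union> Rf" using g yb by (auto simp: Rf_def)
  qed
  hence "card K \<le> card ({(0, False), (int n div 2, False)} \<union> Rf)"
    by (rule card_mono[rotated]) (simp add: Rf_def klein_subgroupD(1)[OF K])
  also have "\<dots> \<le> 2 + card Rf" using card_Un_le[of "{(0::int, False), (int n div 2, False)}" Rf]
    by (simp add: card_insert_le_m1)
  finally have "\<not> card Rf \<le> 1" using klein_subgroupD(2)[OF K] by simp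
  moreover have "finite Rf" using klein_subgroupD(1)[OF K] by (simp add: Rf_def)
  ultimately obtain g h where "g \<in> Rf" "h \<in> Rf" "g \<noteq> h" by (metis card_le_Suc0_iff_eq One_nat_def)
  thus ?thesis using that by (cases g, cases h) (auto simp: Rf_def)
qed

section \<open>Subgroups of the dihedral group\<close>

lemma nat_pow_restrict [simp]: "x [^]\<^bsub>G\<lparr>carrier := H\<rparr>\<^esub> (j::nat) = x [^]\<^bsub>G\<^esub> j"
  by (induct j) simp_all

locale dihedral_subgroup =
  fixes n :: nat and H :: "(int \<times> bool) set"
  assumes n_ge_1: "n \<ge> 1" and subgroup_H: "subgroup H (dihedral n)"
begin

abbreviation G where "G \<equiv> dihedral n"

abbreviation SH where "SH \<equiv> G\<lparr>carrier := H\<rparr>"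

lemma group_G: "group G"
  by (rule group_dihedral[OF n_ge_1])

lemma group_SH: "group SH"
  by (rule subgroup.subgroup_is_group[OF subgroup_H group_G])

lemma H_carrier: "x \<in> H \<Longrightarrow> x \<in> carrier G"
  using subgroup.subset[OF subgroup_H] by blast

lemma finite_H: "finite H"
  using finite_dihedral H_carrier by (meson finite_subset subsetI)

lemma H_mult: "x \<in> H \<Longrightarrow> y \<in> H \<Longrightarrow> x \<otimes>\<^bsub>G\<^esub> y \<in> H"
  by (rule subgroup.m_closed[OF subgroup_H])

lemma H_one: "(0, False) \<in> H"
  using subgroup.one_closed[OF subgroup_H] by (simp add: dihedral_one)

lemma H_nat_pow: "x \<in> H \<Longrightarrow> x [^]\<^bsub>G\<^esub> (j::nat) \<in> H"
  by (induct j) (simp_all add: H_one dihedral_one H_mult)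

text \<open>The rotations in \<open>H\<close> are the powers of \<open>\<rho> = r\<^sup>d\<close>, of order \<open>m = n / d\<close>.\<close>
definition d :: int where "d = int (LEAST k. 0 < k \<and> k \<le> n \<and> (int k mod int n, False) \<in> H)"

definition \<rho> :: "int \<times> bool" where "\<rho> = (d mod int n, False)"

lemma d_pos: "0 < d" and d_le: "d \<le> int n" and rho_in_H: "\<rho> \<in> H"
proof -
  have "0 < n \<and> n \<le> n \<and> (int n mod int n, False) \<in> H" using n_ge_1 H_one by simp
  from LeastI[of "\<lambda>k. 0 < k \<and> k \<le> n \<and> (int k mod int n, False) \<in> H", OF this]
  show "0 < d" "d \<le> int n" "\<rho> \<in> H" by (simp_all add: d_def \<rho>_def)
qed

lemma d_le_rotation:
  assumes "0 < k" "k \<le> int n" "(k mod int n, False) \<in> H" shows "d \<le> k"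
proof -
  have "(LEAST k. 0 < k \<and> k \<le> n \<and> (int k mod int n, False) \<in> H) \<le> nat k"
    using assms by (intro Least_le) simp
  thus ?thesis using assms(1) unfolding d_def by linarith
qed

lemma rho_nat_pow: "\<rho> [^]\<^bsub>G\<^esub> (j::nat) = ((int j * d) mod int n, False)"
  unfolding \<rho>_def dihedral_rotation_nat_pow by (simp add: mod_simps)

text \<open>Writing \<open>k = qd + r\<close> with \<open>0 \<le> r < d\<close>, the rotation \<open>r\<^sup>r = r\<^sup>k \<rho>\<^sup>-\<^sup>q\<close> lies in \<open>H\<close>, so
  minimality of \<open>d\<close> forces \<open>r = 0\<close>.\<close>
lemma d_dvd_rotation:
  assumes k: "0 \<le> k" "k \<le> int n" and kH: "(k mod int n, False) \<in> H"
  shows "d dvd k"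
proof -
  define q r where "q = k div d" and "r = k mod d"
  have q: "0 \<le> q" using k d_pos unfolding q_def by (simp add: pos_imp_zdiv_nonneg_iff)
  have r: "0 \<le> r" "r < d" "k - q * d = r" using d_pos by (simp_all add: q_def r_def mod_div_mult_eq minus_div_mult_eq_mod)
  have qd: "0 \<le> q * d mod int n" "q * d mod int n < int n" using n_ge_1 by simp_all
  have "(q * d mod int n, False) \<in> H" using H_nat_pow[OF rho_in_H, of "nat q"] q by (simp add: rho_nat_pow)
  hence "((- (q * d mod int n)) mod int n, False) \<in> H"
    using subgroup.m_inv_closed[OF subgroup_H] dihedral_rotation_inv[OF n_ge_1 qd] by metis
  hence "(k mod int n, False) \<otimes>\<^bsub>G\<^esub> ((- (q * d mod int n)) mod int n, False) \<in> H" using H_mult[OF kH] by blast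
  hence rH: "(r mod int n, False) \<in> H" using r(3) by (simp add: dihedral_mult mod_simps)
  have "r = 0"
  proof (rule ccontr)
    assume "r \<noteq> 0"
    thus False using d_le_rotation[of r] r d_le rH by simp
  qed
  thus ?thesis by (simp add: r_def dvd_eq_mod_eq_0)
qed

definition m :: nat where "m = nat (int n div d)"

lemma m_pos: "0 < m" and n_eq: "int n = int m * d"
proof -
  obtain t where t: "int n = d * t" using d_dvd_rotation[of "int n"] H_one by (auto elim: dvdE)
  have "0 < d * t" using t n_ge_1 by simp
  hence "0 < t" using d_pos by (simp add: zero_less_mult_iff)
  thus "0 < m" "int n = int m * d" using t d_pos by (simp_all add: m_def)
qed

lemma rho_nat_pow_m: "\<rho> [^]\<^bsub>G\<^esub> m = \<one>\<^bsub>G\<^esub>"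
  by (simp add: rho_nat_pow dihedral_one n_eq[symmetric])

lemma rho_nat_pow_less: "i < m \<Longrightarrow> \<rho> [^]\<^bsub>G\<^esub> i = (int i * d, False)"
  using d_pos n_eq by (simp add: rho_nat_pow)

lemma rho_nat_pow_inj: "i < m \<Longrightarrow> j < m \<Longrightarrow> \<rho> [^]\<^bsub>G\<^esub> i = \<rho> [^]\<^bsub>G\<^esub> j \<Longrightarrow> i = j"
  using d_pos by (simp add: rho_nat_pow_less)

lemma rotation_in_H:
  assumes kH: "(k, False) \<in> H" obtains i where "i < m" "(k, False) = \<rho> [^]\<^bsub>G\<^esub> i"
proof -
  have k: "0 \<le> k" "k < int n" using H_carrier[OF kH] by (simp_all add: dihedral_carrier_iff)
  obtain t where t: "k = d * t" using d_dvd_rotation[of k] k kH by (auto elim: dvdE)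
  have t0: "0 \<le> t" using t k d_pos by (simp add: zero_le_mult_iff)
  have "t < int m" using t k(2) n_eq d_pos by (simp add: mult.commute)
  hence "nat t < m" using t0 by linarith
  moreover have "(k, False) = \<rho> [^]\<^bsub>G\<^esub> (nat t)" using rho_nat_pow_less[OF \<open>nat t < m\<close>] t t0
    by (simp add: mult.commute)
  ultimately show ?thesis by (rule that)
qed

lemma rho_half_turn:
  assumes "even m" shows "\<rho> [^]\<^bsub>G\<^esub> (m div 2) = (int n div 2, False)" and "int n = 2 * (int n div 2)"
proof -
  obtain t where t: "m = 2 * t" using assms by (elim evenE)
  have "int n = 2 * (int t * d)" using n_eq t by simp
  thus "int n = 2 * (int n div 2)" by simp
  show "\<rho> [^]\<^bsub>G\<^esub> (m div 2) = (int n div 2, False)"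
    using rho_nat_pow_less[of t] t m_pos \<open>int n = 2 * (int t * d)\<close> by simp
qed

end

context dihedral_subgroup
begin

lemma half_turn_in_H: "even m \<Longrightarrow> (int n div 2, False) \<in> H"
  using H_nat_pow[OF rho_in_H, of "m div 2"] rho_half_turn by simp

lemma klein_subgroup_if_reflection:
  assumes \<tau>H: "(k0, True) \<in> H" and ev: "even m"
  shows "\<exists>K. klein_subgroup G K \<and> K \<subseteq> H"
proof -
  interpret group G by (rule group_G)
  define x where "x = int n div 2"
  have n2: "int n = 2 * x" using rho_half_turn(2)[OF ev] by (simp add: x_def)
  have xH: "(x, False) \<in> H" using half_turn_in_H[OF ev] by (simp add: x_def)
  have "klein_subgroup G {\<one>\<^bsub>G\<^esub>, (x, False), (k0, True), (x, False) \<otimes>\<^bsub>G\<^esub> (k0, True)}"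
  proof (rule klein_subgroupI)
    show "(x, False) \<otimes>\<^bsub>G\<^esub> (k0, True) = (k0, True) \<otimes>\<^bsub>G\<^esub> (x, False)"
      by (rule dihedral_half_turn_reflection_commute[OF n2])
  qed (use H_carrier xH \<tau>H n2 n_ge_1 in \<open>simp_all add: dihedral_mult dihedral_one\<close>)
  moreover have "{\<one>\<^bsub>G\<^esub>, (x, False), (k0, True), (x, False) \<otimes>\<^bsub>G\<^esub> (k0, True)} \<subseteq> H"
    using H_one xH \<tau>H H_mult[OF xH \<tau>H] by (simp add: dihedral_one)
  ultimately show ?thesis by blast
qed

text \<open>Two distinct reflections of a Klein subgroup multiply to the half turn, which lies in
  \<open>\<langle>\<rho>\<rangle>\<close> only if \<open>m\<close> is even.\<close>
lemma reflection_and_even_if_klein_subgroup: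
  assumes K: "klein_subgroup G K" and KH: "K \<subseteq> H"
  shows "\<exists>k0. (k0, True) \<in> H" and "even m"
proof -
  interpret group G by (rule group_G)
  obtain k1 k2 where k12: "k1 \<noteq> k2" "(k1, True) \<in> K" "(k2, True) \<in> K"
    using klein_subgroup_dihedral_two_reflections[OF n_ge_1 K] .
  show "\<exists>k0. (k0, True) \<in> H" using k12 KH by blast
  have subK: "subgroup K G" using K by (simp add: klein_subgroup_def)
  define z where "z = (k1 - k2) mod int n"
  have zK: "(z, False) \<in> K" using subgroup.m_closed[OF subK k12(2,3)] by (simp add: dihedral_mult z_def)
  have k: "0 \<le> k1" "k1 < int n" "0 \<le> k2" "k2 < int n"
    using KH k12 H_carrier by (auto simp: dihedral_carrier_iff)
  have "z \<noteq> 0"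
  proof
    assume "z = 0"
    hence "k1 mod int n = k2 mod int n" by (simp add: z_def mod_eq_dvd_iff dvd_eq_mod_eq_0)
    thus False using k k12(1) by (simp add: mod_pos_pos_trivial)
  qed
  hence nz: "int n = 2 * z"
    using dihedral_rotation_sq_one[of z] H_carrier KH zK klein_subgroupD(3)[OF K zK] by auto
  hence "d dvd z" using d_dvd_rotation[of z] zK KH n_ge_1 by (auto simp: mod_pos_pos_trivial)
  then obtain t where "z = d * t" by (elim dvdE)
  hence "int m * d = (2 * t) * d" by (simp only: n_eq[symmetric] nz) (simp add: ac_simps)
  hence "int m = 2 * t" using d_pos by simp
  thus "even m" by presburger
qed

lemma klein_subgroup_iff: "(\<exists>K. klein_subgroup G K \<and> K \<subseteq> H) \<longleftrightarrow> (\<exists>k0. (k0, True) \<in> H) \<and> even m"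
  using klein_subgroup_if_reflection reflection_and_even_if_klein_subgroup by blast

lemma rotations_normal_form:
  assumes "\<And>g. g \<in> H \<Longrightarrow> \<not> snd g"
  shows "bij_betw (\<lambda>i. \<rho> [^]\<^bsub>SH\<^esub> i) {..<m} H"
proof (rule bij_betwI')
  fix g assume g: "g \<in> H"
  obtain k where "g = (k, False)" using assms[OF g] by (cases g) auto
  thus "\<exists>i\<in>{..<m}. g = \<rho> [^]\<^bsub>SH\<^esub> i" using rotation_in_H g by (metis lessThan_iff nat_pow_restrict)
qed (use rho_nat_pow_inj H_nat_pow[OF rho_in_H] in auto)

lemma dihedral_relations_H:
  assumes \<tau>H: "(k0, True) \<in> H"
  shows "dihedral_relations SH \<rho> (k0, True) m"
  using rho_in_H \<tau>H rho_nat_pow_m by (simp add: dihedral_relations_def \<rho>_def dihedral_mult dihedral_one mod_simps)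

lemma dihedral_normal_form_H:
  assumes \<tau>H: "(k0, True) \<in> H"
  shows "bij_betw (dihedral_word SH \<rho> (k0, True)) ({..<m} \<times> UNIV) H"
proof (rule bij_betwI')
  interpret group G by (rule group_G)
  have \<tau>: "(k0, True) \<in> carrier G" using H_carrier[OF \<tau>H] .
  have word: "dihedral_word SH \<rho> (k0, True) (i, e) = \<rho> [^]\<^bsub>G\<^esub> i \<otimes>\<^bsub>G\<^esub> (if e then (k0, True) else \<one>\<^bsub>G\<^esub>)" for i e
    by (simp add: dihedral_word_def)
  fix p q :: "nat \<times> bool" assume "p \<in> {..<m} \<times> UNIV" "q \<in> {..<m} \<times> UNIV"
  then obtain i e j f where pq: "p = (i, e)" "q = (j, f)" "i < m" "j < m" by auto
  have snd_word: "snd (dihedral_word SH \<rho> (k0, True) (i, e)) = e" if "i < m" for i e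
    using rho_nat_pow_less[OF that] by (simp add: word snd_dihedral_mult dihedral_one)
  show "(dihedral_word SH \<rho> (k0, True) p = dihedral_word SH \<rho> (k0, True) q) = (p = q)"
  proof
    assume eq: "dihedral_word SH \<rho> (k0, True) p = dihedral_word SH \<rho> (k0, True) q"
    hence "e = f" using snd_word pq by metis
    moreover have "\<rho> [^]\<^bsub>G\<^esub> i = \<rho> [^]\<^bsub>G\<^esub> j"
      using eq \<tau> H_carrier[OF rho_in_H] r_cancel \<open>e = f\<close> by (cases f) (auto simp: pq word)
    ultimately show "p = q" using rho_nat_pow_inj pq by simp
  qed simp
next
  interpret group G by (rule group_G)
  fix p :: "nat \<times> bool" assume "p \<in> {..<m} \<times> UNIV"
  thus "dihedral_word SH \<rho> (k0, True) p \<in> H"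
    using H_nat_pow[OF rho_in_H] H_mult \<tau>H H_one by (cases p) (simp add: dihedral_word_def dihedral_one)
next
  interpret group G by (rule group_G)
  fix g assume g: "g \<in> H"
  obtain k b where kb: "g = (k, b)" by (cases g)
  define t where "t = (if b then (k0, True) else \<one>\<^bsub>G\<^esub>)"
  have t: "t \<in> H" "t \<in> carrier G" "t \<otimes>\<^bsub>G\<^esub> t = \<one>\<^bsub>G\<^esub>"
    using \<tau>H H_one H_carrier n_ge_1 by (auto simp: t_def dihedral_mult dihedral_one dihedral_carrier_iff)
  obtain k' where k': "g \<otimes>\<^bsub>G\<^esub> t = (k', False)" by (cases b) (simp_all add: t_def kb dihedral_mult dihedral_one)
  then obtain i where i: "i < m" "g \<otimes>\<^bsub>G\<^esub> t = \<rho> [^]\<^bsub>G\<^esub> i"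
    using rotation_in_H H_mult[OF g t(1)] by metis
  have "g = (g \<otimes>\<^bsub>G\<^esub> t) \<otimes>\<^bsub>G\<^esub> t" using t H_carrier[OF g] by (simp add: m_assoc)
  thus "\<exists>p\<in>{..<m} \<times> UNIV. g = dihedral_word SH \<rho> (k0, True) p"
    using i by (intro bexI[of _ "(i, b)"]) (simp_all add: dihedral_word_def t_def)
qed

lemma circle_extension_SH: "real_primitive SH u f \<Longrightarrow> circle_extension SH u"
  using group_SH real_primitive_Ints[of SH u f]
  by (simp add: circle_extension_def circle_extension_axioms_def)

lemma cohomologous_to_int_H_rotations:
  assumes "\<And>g. g \<in> H \<Longrightarrow> \<not> snd g" and prim: "real_primitive SH u f"
  shows "cohomologous_to_int SH u"
  by (rule circle_extension.cohomologous_to_int_cyclic[OF circle_extension_SH[OF prim] _ m_pos])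
    (use rho_in_H rho_nat_pow_m rotations_normal_form[OF assms(1)] in simp_all)

lemma cohomologous_to_int_H_odd:
  assumes \<tau>H: "(k0, True) \<in> H" and odd: "odd m" and prim: "real_primitive SH u f"
  shows "cohomologous_to_int SH u"
  using circle_extension.cohomologous_to_int_dihedral[OF circle_extension_SH[OF prim]
      dihedral_relations_H[OF \<tau>H] m_pos] dihedral_normal_form_H[OF \<tau>H] odd
  by simp

lemma cohomologous_to_int_H_iff:
  assumes \<tau>H: "(k0, True) \<in> H" and ev: "even m" and prim: "real_primitive SH u f"
  shows "cohomologous_to_int SH u \<longleftrightarrow> u (int n div 2, False) (k0, True) - u (k0, True) (int n div 2, False) \<in> \<int>"
proof
  assume "cohomologous_to_int SH u"
  thus "u (int n div 2, False) (k0, True) - u (k0, True) (int n div 2, False) \<in> \<int>"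
    using cohomologous_to_int_commute[of SH u "(int n div 2, False)" "(k0, True)"] half_turn_in_H[OF ev] \<tau>H
      dihedral_half_turn_reflection_commute[OF rho_half_turn(2)[OF ev]]
    by simp
next
  assume "u (int n div 2, False) (k0, True) - u (k0, True) (int n div 2, False) \<in> \<int>"
  thus "cohomologous_to_int SH u"
    using circle_extension.cohomologous_to_int_dihedral[OF circle_extension_SH[OF prim]
        dihedral_relations_H[OF \<tau>H] m_pos] dihedral_normal_form_H[OF \<tau>H] rho_half_turn(1)[OF ev]
    by simp
qed

lemma commutator_half_turn_half_Ints:
  assumes \<tau>H: "(k0, True) \<in> H" and ev: "even m" and prim: "real_primitive SH u f"
  shows "2 * (u (int n div 2, False) (k0, True) - u (k0, True) (int n div 2, False)) \<in> \<int>"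
  using circle_extension.dihedral_commutator_half_Ints[OF circle_extension_SH[OF prim]
      dihedral_relations_H[OF \<tau>H] ev] rho_half_turn(1)[OF ev]
  by simp

end

section \<open>A cocycle realizing the nontrivial class\<close>

text \<open>The carry of the rotation part of a product in \<open>D\<^sub>n\<close>: the integer lost when reducing mod \<open>n\<close>.\<close>
definition carry :: "nat \<Rightarrow> int \<times> bool \<Rightarrow> int \<times> bool \<Rightarrow> int" where
  "carry n a b = (fst a + (if snd a then - fst b else fst b)) div int n"

definition carry_cocycle :: "nat \<Rightarrow> (int \<times> bool) list \<Rightarrow> int" where
  "carry_cocycle n xs = (if snd (xs ! 0) then carry n (xs ! 1) (xs ! 2) else 0)"

lemma zdiv_mod_add_left:
  assumes "(n::int) > 0" shows "(A mod n + t) div n = (A + t) div n - A div n"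
proof -
  have "(A + t) div n = (A mod n + t + n * (A div n)) div n" by (simp add: add.commute add.left_commute)
  also have "\<dots> = A div n + (A mod n + t) div n" using div_mult_self2[of n "A mod n + t" "A div n"] assms by simp
  finally show ?thesis by simp
qed

lemma zdiv_mod_diff_left: "(n::int) > 0 \<Longrightarrow> (A mod n - t) div n = (A - t) div n - A div n"
  using zdiv_mod_add_left[of n A "- t"] by simp

lemma zdiv_mod_add_right: "(n::int) > 0 \<Longrightarrow> (k + B mod n) div n = (k + B) div n - B div n"
  using zdiv_mod_add_left[of n B k] by (simp add: add.commute)

lemma zdiv_mod_diff_right:
  assumes "(n::int) > 0" shows "(k - B mod n) div n = (k - B) div n + B div n"
proof -
  have "B div n * n + B mod n = B" by (rule div_mult_mod_eq)
  hence "k - B = (k - B mod n) + n * (- (B div n))" by (simp add: algebra_simps)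
  hence "(k - B) div n = ((k - B mod n) + n * (- (B div n))) div n" by (rule arg_cong)
  also have "\<dots> = - (B div n) + (k - B mod n) div n"
    using div_mult_self2[of n "k - B mod n" "- (B div n)"] assms by simp
  finally show ?thesis by simp
qed

text \<open>\<open>\<delta> carry = 2 carry_cocycle\<close>, so \<open>carry / 2\<close> is a real primitive of the integral cocycle
  \<open>carry_cocycle\<close>.\<close>
lemma carry_cobound:
  assumes "n \<ge> 1"
  shows "carry n b c - carry n (a \<otimes>\<^bsub>dihedral n\<^esub> b) c + carry n a (b \<otimes>\<^bsub>dihedral n\<^esub> c) - carry n a b
       = (if snd a then 2 * carry n b c else 0)"
proof -
  obtain k1 b1 k2 b2 k3 b3 where abc: "a = (k1, b1)" "b = (k2, b2)" "c = (k3, b3)"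
    by (cases a, cases b, cases c)
  have n: "int n > 0" using assms by simp
  show ?thesis unfolding abc
    by (cases b1; cases b2; simp add: carry_def dihedral_mult zdiv_mod_add_left[OF n]
        zdiv_mod_diff_left[OF n] zdiv_mod_add_right[OF n] zdiv_mod_diff_right[OF n] algebra_simps)
qed

lemma carry_cocycle_real_primitive:
  assumes "n \<ge> 1"
  shows "real_primitive (dihedral n) (\<lambda>x y. real_of_int (carry n x y) / 2) (carry_cocycle n)"
  unfolding real_primitive_def
proof (intro ballI)
  fix a b c
  have "rcobound2 (dihedral n) (\<lambda>x y. real_of_int (carry n x y) / 2) a b c
      = real_of_int (carry n b c - carry n (a \<otimes>\<^bsub>dihedral n\<^esub> b) c + carry n a (b \<otimes>\<^bsub>dihedral n\<^esub> c) - carry n a b) / 2"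
    by (simp add: rcobound2_def diff_divide_distrib add_divide_distrib)
  also have "\<dots> = real_of_int (carry_cocycle n [a, b, c])"
    unfolding carry_cobound[OF assms] by (simp add: carry_cocycle_def)
  finally show "rcobound2 (dihedral n) (\<lambda>x y. real_of_int (carry n x y) / 2) a b c = real_of_int (carry_cocycle n [a, b, c])" .
qed

lemma cocycle_carry_cocycle:
  assumes n: "n \<ge> 1"
  shows "cocycle (dihedral n) 3 (carry_cocycle n)"
  unfolding cocycle_3_iff
proof
  fix xs assume "xs \<in> tuples (dihedral n) 4"
  then obtain a b c e where xs: "xs = [a, b, c, e]" and abce: "a \<in> carrier (dihedral n)"
    "b \<in> carrier (dihedral n)" "c \<in> carrier (dihedral n)" "e \<in> carrier (dihedral n)"
    unfolding tuples_4_iff by blast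
  interpret group "dihedral n" by (rule group_dihedral[OF n])
  let ?v = "\<lambda>x y. real_of_int (carry n x y) / 2"
  have "real_of_int (cobound (dihedral n) 3 (carry_cocycle n) [a, b, c, e])
     = rcobound2 (dihedral n) ?v b c e - rcobound2 (dihedral n) ?v (a \<otimes>\<^bsub>dihedral n\<^esub> b) c e
       + rcobound2 (dihedral n) ?v a (b \<otimes>\<^bsub>dihedral n\<^esub> c) e - rcobound2 (dihedral n) ?v a b (c \<otimes>\<^bsub>dihedral n\<^esub> e)
       + rcobound2 (dihedral n) ?v a b c"
    using carry_cocycle_real_primitive[OF n] abce by (simp add: cobound_3_eq real_primitive_def)
  also have "\<dots> = 0" by (rule rcobound2_cobound_zero[OF is_group abce])
  finally show "cobound (dihedral n) 3 (carry_cocycle n) xs = 0" using xs by simp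
qed

lemma carry_commutator_half_turn:
  assumes n2: "int n = 2 * x" and k: "0 \<le> k" "k < int n"
  shows "carry n (x, False) (k, True) - carry n (k, True) (x, False) = 1"
proof (cases "k < x")
  case True
  have "(x + k) div int n = 0" using True k n2 by (simp add: div_pos_pos_trivial)
  moreover have "(k - x + int n) div int n = 0" using True k n2 by (simp add: div_pos_pos_trivial)
  hence "(k - x) div int n = -1" using n2 k div_add_self2[of "int n" "k - x"] by simp
  ultimately show ?thesis by (simp add: carry_def)
next
  case False
  have "(k - x) div int n = 0" using False k n2 by (simp add: div_pos_pos_trivial)
  moreover have "(x + k - int n) div int n = 0" using False k n2 by (simp add: div_pos_pos_trivial)
  hence "(x + k) div int n = 1" using n2 k div_add_self2[of "int n" "x + k - int n"] by simp
  ultimately show ?thesis by (simp add: carry_def)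
qed

section \<open>The restriction map in degree 3\<close>

context dihedral_subgroup
begin

lemma real_primitive_restrict_H: "real_primitive G u f \<Longrightarrow> real_primitive SH u f"
  using real_primitive_restrict H_carrier by blast

text \<open>The obstruction \<open>\<beta>\<close> is the same number for \<open>H\<close> and for \<open>D\<^sub>n\<close>, viewed as the subgroup \<open>W\<close> of
  itself.\<close>
lemma res_injective_3_if_klein:
  assumes klein: "\<exists>K. klein_subgroup G K \<and> K \<subseteq> H"
  shows "res_injective G H 3"
  unfolding res_injective_def
proof (intro allI impI, elim conjE)
  interpret group G by (rule group_G)
  interpret W: dihedral_subgroup n "carrier G" by unfold_locales (use n_ge_1 subgroup_self in auto)
  fix f assume coc: "cocycle G 3 f" and cob: "coboundary SH 3 f"
  obtain k0 where \<tau>H: "(k0, True) \<in> H" and ev: "even m" using klein klein_subgroup_iff by blast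
  have evW: "even W.m" using klein W.klein_subgroup_iff H_carrier by blast
  obtain u where u: "real_primitive G u f" using cocycle_3_real_primitive[OF finite_dihedral coc] .
  have "cohomologous_to_int SH u"
    using group.cohomologous_to_int_if_coboundary_3[OF group_SH] finite_H real_primitive_restrict_H[OF u] cob
    by simp
  hence "u (int n div 2, False) (k0, True) - u (k0, True) (int n div 2, False) \<in> \<int>"
    using cohomologous_to_int_H_iff[OF \<tau>H ev real_primitive_restrict_H[OF u]] by simp
  hence "cohomologous_to_int W.SH u"
    using W.cohomologous_to_int_H_iff[OF H_carrier[OF \<tau>H] evW W.real_primitive_restrict_H[OF u]] by simp
  hence "cohomologous_to_int G u" by (simp add: cohomologous_to_int_def)
  thus "coboundary G 3 f" by (rule coboundary_3_if_cohomologous_to_int[OF u])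
qed

text \<open>A cocycle on \<open>H\<close> whose commutator invariant \<open>\<beta>\<close> is not integral has \<open>\<beta> \<equiv> 1/2\<close>, and
  subtracting \<open>carry_cocycle\<close> (with \<open>\<beta> = 1/2\<close>) makes it a coboundary.\<close>
lemma res_surjective_3_if_klein:
  assumes klein: "\<exists>K. klein_subgroup G K \<and> K \<subseteq> H"
  shows "res_surjective G H 3"
  unfolding res_surjective_def
proof (intro allI impI)
  fix c assume cc: "cocycle SH 3 c"
  obtain k0 where \<tau>H: "(k0, True) \<in> H" and ev: "even m" using klein klein_subgroup_iff by blast
  obtain u where u: "real_primitive SH u c"
    using group.cocycle_3_real_primitive[OF group_SH _ cc] finite_H by auto
  define \<beta> where "\<beta> = u (int n div 2, False) (k0, True) - u (k0, True) (int n div 2, False)"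
  obtain N where N: "2 * \<beta> = of_int N"
    using commutator_half_turn_half_Ints[OF \<tau>H ev u] by (auto simp: \<beta>_def elim: Ints_cases)
  show "\<exists>f. cocycle G 3 f \<and> coboundary SH 3 (\<lambda>xs. c xs - f xs)"
  proof (cases "even N")
    case True
    hence "\<beta> \<in> \<int>" using N by (auto elim!: evenE)
    hence "coboundary SH 3 c"
      using group.coboundary_3_if_cohomologous_to_int[OF group_SH u] cohomologous_to_int_H_iff[OF \<tau>H ev u]
      by (simp add: \<beta>_def)
    thus ?thesis using cocycle_3_zero[of G] by (intro exI[of _ "\<lambda>xs. 0"]) simp
  next
    case False
    let ?u' = "\<lambda>x y. u x y - real_of_int (carry n x y) / 2"
    have u': "real_primitive SH ?u' (\<lambda>xs. c xs - carry_cocycle n xs)"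
      by (rule real_primitive_diff[OF u real_primitive_restrict_H[OF carry_cocycle_real_primitive[OF n_ge_1]]])
    obtain t where "N = 2 * t + 1" using False by (elim oddE)
    moreover have "?u' (int n div 2, False) (k0, True) - ?u' (k0, True) (int n div 2, False) = \<beta> - 1 / 2"
      using carry_commutator_half_turn[OF rho_half_turn(2)[OF ev], of k0] H_carrier[OF \<tau>H]
      by (simp add: \<beta>_def dihedral_carrier_iff diff_divide_distrib[symmetric] flip: of_int_diff)
    ultimately have "?u' (int n div 2, False) (k0, True) - ?u' (k0, True) (int n div 2, False) = of_int t"
      using N by (simp add: field_simps)
    hence "coboundary SH 3 (\<lambda>xs. c xs - carry_cocycle n xs)"
      using group.coboundary_3_if_cohomologous_to_int[OF group_SH u'] cohomologous_to_int_H_iff[OF \<tau>H ev u']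
      by simp
    thus ?thesis using cocycle_carry_cocycle[OF n_ge_1] by blast
  qed
qed

lemma res_zero_3_if_no_klein:
  assumes no_klein: "\<not> (\<exists>K. klein_subgroup G K \<and> K \<subseteq> H)"
  shows "res_zero G H 3"
  unfolding res_zero_def
proof (intro allI impI)
  fix f assume coc: "cocycle G 3 f"
  obtain u where "real_primitive G u f"
    using group.cocycle_3_real_primitive[OF group_G finite_dihedral coc] .
  hence u: "real_primitive SH u f" by (rule real_primitive_restrict_H)
  have "cohomologous_to_int SH u"
  proof (cases "\<exists>k0. (k0, True) \<in> H")
    case False
    hence "\<not> snd g" if "g \<in> H" for g using that by (cases g) auto
    thus ?thesis using cohomologous_to_int_H_rotations[OF _ u] by blast
  next
    case True
    then obtain k0 where \<tau>H: "(k0, True) \<in> H" ..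
    hence "odd m" using no_klein klein_subgroup_iff by blast
    thus ?thesis by (rule cohomologous_to_int_H_odd[OF \<tau>H _ u])
  qed
  thus "coboundary SH 3 f" by (rule group.coboundary_3_if_cohomologous_to_int[OF group_SH u])
qed

end

theorem proposition2p3:
  fixes n :: nat and H :: "(int \<times> bool) set"
  assumes "n \<ge> 1" and "subgroup H (dihedral n)"
  shows "((\<exists>K. klein_subgroup (dihedral n) K \<and> K \<subseteq> H) \<longrightarrow>
            res_injective (dihedral n) H 3 \<and> res_surjective (dihedral n) H 3)
       \<and> ((\<nexists>K. klein_subgroup (dihedral n) K \<and> K \<subseteq> H) \<longrightarrow>
            res_zero (dihedral n) H 3)"
proof -
  interpret dihedral_subgroup n H by (rule dihedral_subgroup.intro[OF assms])
  show ?thesis using res_injective_3_if_klein res_surjective_3_if_klein res_zero_3_if_no_klein by blast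
qed

end
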